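(* Let $\omega$ be a rectilinearly-convex obstacle that does not have a diagonal. If $\omega$ has a cross $X$, then $X$ is a minimum skeleton for $\omega$.
   Context: An obstacle $\omega$ is a simple polygon in $\mathbb{R}^2$ (a closed, bounded polygonal region without holes whose boundary does not intersect itself), assumed in general position (no three of its vertices are collinear); vertices and edges of $\omega$ are those of its boundary. $\omega$ is rectilinear if each edge is horizontal or vertical, and a rectilinear obstacle is rectilinearly-convex if any two points of $\omega$ can be joined by a shortest rectilinear path (made of horizontal and vertical segments, of minimum $\ell_1$ length) contained in $\omega$. A corner point of a rectilinear path is a point where a horizontal and a vertical segment of the path meet. A set $S$ of closed line segments is inside $\omega$ if the union of its elements is contained in $\omega$. Such an $S$ is a skeleton for $\omega$ if for every pair of points $p,q$ not in the interior of $\omega$ such that every shortest rectilinear path between $p$ and $q$ with at most one corner point meets the interior of $\omega$, each such path intersects some element of $S$; a minimum skeleton is one with the fewest segments. $B(\omega)$ is the smallest closed axis-parallel rectangle containing $\omega$; the extreme edges are the edges of $\omega$ lying on the boundary of $B(\omega)$ (exactly four: left, right, bottom, top); an extreme corner is a vertex of $\omega$ that is a common endpoint of two extreme edges. A diagonal of $\omega$ is a line segment contained in $\omega$ joining two diagonally opposite extreme corners. A cross of $\omega$ is a pair $\{s_H,s_V\}$ of line segments contained in $\omega$, where $s_H$ has one endpoint on each of the two horizontal extreme edges and $s_V$ has one endpoint on each of the two vertical extreme edges. *)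

theory Defs
  imports "HOL-Analysis.Analysis"
begin

type_synonym pt = "real \<times> real"

definition nxt :: "pt list \<Rightarrow> nat \<Rightarrow> nat" where
  "nxt vs i = Suc i mod length vs"

definition edges :: "pt list \<Rightarrow> (pt \<times> pt) set" where
  "edges vs = {(vs ! i, vs ! nxt vs i) | i. i < length vs}"

definition seg :: "pt \<times> pt \<Rightarrow> pt set" where
  "seg e = closed_segment (fst e) (snd e)"

definition poly_boundary :: "pt list \<Rightarrow> pt set" where
  "poly_boundary vs = (\<Union>e\<in>edges vs. seg e)"

definition simple_polygon :: "pt list \<Rightarrow> bool" where
  "simple_polygon vs \<longleftrightarrow> length vs \<ge> 3 \<and> distinct vs \<and>
     (\<forall>i<length vs. \<forall>j<length vs. i \<noteq> j \<longrightarrow>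
        (if j = nxt vs i then
           closed_segment (vs!i) (vs!nxt vs i) \<inter> closed_segment (vs!j) (vs!nxt vs j) = {vs!j}
         else if i = nxt vs j then
           closed_segment (vs!i) (vs!nxt vs i) \<inter> closed_segment (vs!j) (vs!nxt vs j) = {vs!i}
         else closed_segment (vs!i) (vs!nxt vs i) \<inter> closed_segment (vs!j) (vs!nxt vs j) = {}))"

definition region :: "pt list \<Rightarrow> pt set" where
  "region vs = poly_boundary vs \<union>
     {x. x \<notin> poly_boundary vs \<and> bounded (connected_component_set (- poly_boundary vs) x)}"

definition general_position :: "pt list \<Rightarrow> bool" where
  "general_position vs \<longleftrightarrow>
     (\<forall>a\<in>set vs. \<forall>b\<in>set vs. \<forall>c\<in>set vs. a \<noteq> b \<and> a \<noteq> c \<and> b \<noteq> c \<longrightarrow> \<not> collinear {a, b, c})"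

definition rectilinear :: "pt list \<Rightarrow> bool" where
  "rectilinear vs \<longleftrightarrow> (\<forall>e\<in>edges vs. fst (fst e) = fst (snd e) \<or> snd (fst e) = snd (snd e))"

definition l1 :: "pt \<Rightarrow> pt \<Rightarrow> real" where
  "l1 a b = \<bar>fst a - fst b\<bar> + \<bar>snd a - snd b\<bar>"

definition rect_path :: "pt list \<Rightarrow> bool" where
  "rect_path ps \<longleftrightarrow> ps \<noteq> [] \<and>
     (\<forall>i. Suc i < length ps \<longrightarrow> ps!i \<noteq> ps!Suc i \<and>
        (fst (ps!i) = fst (ps!Suc i) \<or> snd (ps!i) = snd (ps!Suc i)))"

definition path_set :: "pt list \<Rightarrow> pt set" where
  "path_set ps = set ps \<union> (\<Union>i\<in>{i. Suc i < length ps}. closed_segment (ps!i) (ps!Suc i))"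

definition path_len :: "pt list \<Rightarrow> real" where
  "path_len ps = (\<Sum>i\<in>{i. Suc i < length ps}. l1 (ps!i) (ps!Suc i))"

definition shortest_rect_path :: "pt \<Rightarrow> pt \<Rightarrow> pt list \<Rightarrow> bool" where
  "shortest_rect_path p q ps \<longleftrightarrow> rect_path ps \<and> hd ps = p \<and> last ps = q \<and>
     (\<forall>ps'. rect_path ps' \<and> hd ps' = p \<and> last ps' = q \<longrightarrow> path_len ps \<le> path_len ps')"

definition horiz :: "pt \<Rightarrow> pt \<Rightarrow> bool" where
  "horiz a b \<longleftrightarrow> a \<noteq> b \<and> snd a = snd b"

definition vert :: "pt \<Rightarrow> pt \<Rightarrow> bool" where
  "vert a b \<longleftrightarrow> a \<noteq> b \<and> fst a = fst b"

definition corners :: "pt list \<Rightarrow> pt set" where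
  "corners ps = {ps!Suc i | i. Suc (Suc i) < length ps \<and>
      ((horiz (ps!i) (ps!Suc i) \<and> vert (ps!Suc i) (ps!Suc (Suc i))) \<or>
       (vert (ps!i) (ps!Suc i) \<and> horiz (ps!Suc i) (ps!Suc (Suc i))))}"

definition rect_convex :: "pt set \<Rightarrow> bool" where
  "rect_convex \<omega> \<longleftrightarrow> (\<forall>p\<in>\<omega>. \<forall>q\<in>\<omega>. \<exists>ps. shortest_rect_path p q ps \<and> path_set ps \<subseteq> \<omega>)"

definition is_segment :: "pt set \<Rightarrow> bool" where
  "is_segment s \<longleftrightarrow> (\<exists>a b. a \<noteq> b \<and> s = closed_segment a b)"

definition short1 :: "pt \<Rightarrow> pt \<Rightarrow> pt list \<Rightarrow> bool" where
  "short1 p q ps \<longleftrightarrow> shortest_rect_path p q ps \<and> card (corners ps) \<le> 1"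

definition skeleton :: "pt set \<Rightarrow> pt set set \<Rightarrow> bool" where
  "skeleton \<omega> S \<longleftrightarrow> (\<forall>s\<in>S. is_segment s) \<and> \<Union>S \<subseteq> \<omega> \<and>
     (\<forall>p q. p \<notin> interior \<omega> \<and> q \<notin> interior \<omega> \<and>
        (\<forall>ps. short1 p q ps \<longrightarrow> path_set ps \<inter> interior \<omega> \<noteq> {}) \<longrightarrow>
        (\<forall>ps. short1 p q ps \<longrightarrow> (\<exists>s\<in>S. path_set ps \<inter> s \<noteq> {})))"

definition min_skeleton :: "pt set \<Rightarrow> pt set set \<Rightarrow> bool" where
  "min_skeleton \<omega> S \<longleftrightarrow> skeleton \<omega> S \<and> finite S \<and>
     (\<forall>S'. skeleton \<omega> S' \<and> finite S' \<longrightarrow> card S \<le> card S')"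

definition xmin :: "pt list \<Rightarrow> real" where "xmin vs = Min (fst ` set vs)"
definition xmax :: "pt list \<Rightarrow> real" where "xmax vs = Max (fst ` set vs)"
definition ymin :: "pt list \<Rightarrow> real" where "ymin vs = Min (snd ` set vs)"
definition ymax :: "pt list \<Rightarrow> real" where "ymax vs = Max (snd ` set vs)"

definition left_edge :: "pt list \<Rightarrow> pt \<times> pt \<Rightarrow> bool" where
  "left_edge vs e \<longleftrightarrow> e \<in> edges vs \<and> seg e \<subseteq> {p. fst p = xmin vs}"
definition right_edge :: "pt list \<Rightarrow> pt \<times> pt \<Rightarrow> bool" where
  "right_edge vs e \<longleftrightarrow> e \<in> edges vs \<and> seg e \<subseteq> {p. fst p = xmax vs}"
definition bottom_edge :: "pt list \<Rightarrow> pt \<times> pt \<Rightarrow> bool" where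
  "bottom_edge vs e \<longleftrightarrow> e \<in> edges vs \<and> seg e \<subseteq> {p. snd p = ymin vs}"
definition top_edge :: "pt list \<Rightarrow> pt \<times> pt \<Rightarrow> bool" where
  "top_edge vs e \<longleftrightarrow> e \<in> edges vs \<and> seg e \<subseteq> {p. snd p = ymax vs}"

definition endpoint_of :: "pt \<Rightarrow> pt \<times> pt \<Rightarrow> bool" where
  "endpoint_of v e \<longleftrightarrow> v = fst e \<or> v = snd e"

definition corner_of :: "pt list \<Rightarrow> (pt list \<Rightarrow> pt \<times> pt \<Rightarrow> bool) \<Rightarrow>
    (pt list \<Rightarrow> pt \<times> pt \<Rightarrow> bool) \<Rightarrow> pt \<Rightarrow> bool" where
  "corner_of vs E1 E2 v \<longleftrightarrow> v \<in> set vs \<and>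
     (\<exists>e1 e2. E1 vs e1 \<and> E2 vs e2 \<and> endpoint_of v e1 \<and> endpoint_of v e2)"

definition has_diagonal :: "pt list \<Rightarrow> bool" where
  "has_diagonal vs \<longleftrightarrow> (\<exists>v w.
     ((corner_of vs left_edge bottom_edge v \<and> corner_of vs right_edge top_edge w) \<or>
      (corner_of vs right_edge bottom_edge v \<and> corner_of vs left_edge top_edge w)) \<and>
     closed_segment v w \<subseteq> region vs)"

definition is_cross :: "pt list \<Rightarrow> pt \<Rightarrow> pt \<Rightarrow> pt \<Rightarrow> pt \<Rightarrow> bool" where
  "is_cross vs a b c d \<longleftrightarrow>
     closed_segment a b \<subseteq> region vs \<and> closed_segment c d \<subseteq> region vs \<and>
     ((\<exists>e. bottom_edge vs e \<and> a \<in> seg e) \<and> (\<exists>e. top_edge vs e \<and> b \<in> seg e)) \<and>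
     ((\<exists>e. left_edge vs e \<and> c \<in> seg e) \<and> (\<exists>e. right_edge vs e \<and> d \<in> seg e))"

end

(* A shortest rectilinear path with at most one corner from p to q is an elbow: two legs
   meeting at (x_q, y_p) or at (x_p, y_q). Suppose such an elbow avoids the cross but meets the
   interior. Row and column convexity force its corner to be interior, with s_H and s_V passing
   beyond the corner on the respective legs; by continuity they then stay outside the bounding
   box of p and q, and comparing the sides on which s_H crosses the two rows shows that the other
   elbow cannot meet the interior at all. Hence the cross meets every elbow that the skeleton
   condition constrains.
   Conversely, any skeleton meets every row and every column through an interior point. Since
   the boundary lies in the closure of the interior (Jordan curve theorem), a skeleton made of a
   single segment would have to join two opposite corners of the bounding box, i.e. it would be
   a diagonal. *)

theory Submission
  imports Defs
begin

section \<open>Rectilinear paths\<close>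

lemma l1_same [simp]: "l1 a a = 0"
  by (simp add: l1_def)

lemma l1_nonneg: "0 \<le> l1 a b"
  by (simp add: l1_def)

lemma l1_triangle: "l1 a c \<le> l1 a b + l1 b c"
  unfolding l1_def using abs_triangle_ineq[of "fst a - fst b" "fst b - fst c"]
    abs_triangle_ineq[of "snd a - snd b" "snd b - snd c"] by simp

lemma l1_pos: "a \<noteq> b \<Longrightarrow> 0 < l1 a b"
  unfolding l1_def by (cases a; cases b) auto

lemma l1_closed_segment:
  assumes "z \<in> closed_segment x y"
  shows "l1 x z + l1 z y = l1 x y"
proof -
  obtain u where u: "0 \<le> u" "u \<le> 1" "z = (1 - u) *\<^sub>R x + u *\<^sub>R y"
    using assms by (auto simp: closed_segment_def)
  have diffs: "fst x - fst z = u * (fst x - fst y)" "fst z - fst y = (1 - u) * (fst x - fst y)"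
    "snd x - snd z = u * (snd x - snd y)" "snd z - snd y = (1 - u) * (snd x - snd y)"
    unfolding u(3) by (auto simp: algebra_simps)
  show ?thesis
    unfolding l1_def diffs abs_mult using u by (simp add: algebra_simps)
qed

abbreviation elbow :: "pt \<Rightarrow> pt \<Rightarrow> pt \<Rightarrow> bool" where
  "elbow p m q \<equiv> (snd p = snd m \<and> fst m = fst q) \<or> (fst p = fst m \<and> snd m = snd q)"

lemma l1_elbow: "elbow p m q \<Longrightarrow> l1 p m + l1 m q = l1 p q"
  by (auto simp: l1_def)

lemma in_box_if_l1_tight:
  assumes "l1 p z + l1 z q \<le> l1 p q"
  shows "fst z \<in> closed_segment (fst p) (fst q) \<and> snd z \<in> closed_segment (snd p) (snd q)"
  using assms unfolding l1_def closed_segment_eq_real_ivl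
  by (auto split: if_splits abs_split)

lemma path_len_conv_sum: "path_len ps = (\<Sum>i<length ps - 1. l1 (ps!i) (ps!Suc i))"
proof -
  have "{i. Suc i < length ps} = {..<length ps - 1}" by auto
  then show ?thesis by (simp add: path_len_def)
qed

lemma l1_nth_le_sum:
  assumes "i \<le> j" "j < length ps"
  shows "l1 (ps!i) (ps!j) \<le> (\<Sum>k=i..<j. l1 (ps!k) (ps!Suc k))"
  using assms
proof (induction j rule: dec_induct)
  case (step k)
  then show ?case using l1_triangle[of "ps!i" "ps!Suc k" "ps!k"] by simp
qed simp

lemma path_len_split:
  assumes "i \<le> j" "j < length ps"
  shows "path_len ps = (\<Sum>k=0..<i. l1 (ps!k) (ps!Suc k)) + (\<Sum>k=i..<j. l1 (ps!k) (ps!Suc k))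
    + (\<Sum>k=j..<length ps - 1. l1 (ps!k) (ps!Suc k))"
proof -
  have "j \<le> length ps - 1" using assms by simp
  then show ?thesis
    unfolding path_len_conv_sum using assms(1)
    by (simp add: atLeast0LessThan[symmetric] sum.atLeastLessThan_concat)
qed

lemma path_set_cases:
  assumes "z \<in> path_set ps"
  obtains (vertex) i where "i < length ps" "z = ps!i"
    | (edge) i where "Suc i < length ps" "z \<in> closed_segment (ps!i) (ps!Suc i)"
  using assms unfolding path_set_def by (auto simp: in_set_conv_nth)

lemma l1_via_point_le_path_len:
  assumes "ps \<noteq> []" "z \<in> path_set ps"
  shows "l1 (hd ps) z + l1 z (last ps) \<le> path_len ps"
proof -
  let ?f = "\<lambda>k. l1 (ps!k) (ps!Suc k)"
  let ?N = "length ps - 1"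
  have ends: "hd ps = ps!0" "last ps = ps!?N"
    using assms(1) by (auto simp: hd_conv_nth last_conv_nth)
  from assms(2) show ?thesis
  proof (cases rule: path_set_cases)
    case (vertex i)
    have "l1 (ps!0) (ps!i) \<le> sum ?f {0..<i}" "l1 (ps!i) (ps!?N) \<le> sum ?f {i..<?N}"
      using l1_nth_le_sum[of 0 i ps] l1_nth_le_sum[of i ?N ps] vertex by auto
    then show ?thesis using path_len_split[of i i ps] vertex ends by simp
  next
    case (edge i)
    have "l1 (ps!0) (ps!i) \<le> sum ?f {0..<i}" "l1 (ps!Suc i) (ps!?N) \<le> sum ?f {Suc i..<?N}"
      using l1_nth_le_sum[of 0 i ps] l1_nth_le_sum[of "Suc i" ?N ps] edge by auto
    moreover have "l1 (ps!i) z + l1 z (ps!Suc i) = sum ?f {i..<Suc i}"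
      using l1_closed_segment edge by simp
    moreover have "l1 (ps!0) z \<le> l1 (ps!0) (ps!i) + l1 (ps!i) z"
      "l1 z (ps!?N) \<le> l1 z (ps!Suc i) + l1 (ps!Suc i) (ps!?N)"
      by (rule l1_triangle)+
    ultimately show ?thesis using path_len_split[of i "Suc i" ps] edge ends by simp
  qed
qed

lemma set_subset_path_set: "set ps \<subseteq> path_set ps"
  by (auto simp: path_set_def)

lemma l1_hd_last_le_path_len:
  assumes "ps \<noteq> []"
  shows "l1 (hd ps) (last ps) \<le> path_len ps"
proof -
  have "last ps \<in> path_set ps"
    using assms set_subset_path_set[of ps] last_in_set[of ps] by blast
  then show ?thesis using l1_via_point_le_path_len[OF assms] by fastforce
qed

lemma connected_path_set:
  assumes "ps \<noteq> []"
  shows "connected (path_set ps)"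
proof -
  define C where "C k = insert (ps!0) (\<Union>i<k. closed_segment (ps!i) (ps!Suc i))" for k
  have "connected (C k)" if "k < length ps" for k
    using that
  proof (induction k)
    case (Suc k)
    have "ps!k \<in> C k"
      by (cases k) (auto simp: C_def)
    moreover have "C (Suc k) = C k \<union> closed_segment (ps!k) (ps!Suc k)"
      by (auto simp: C_def lessThan_Suc)
    ultimately show ?case using Suc by (simp only:) (intro connected_Un, auto)
  qed (simp add: C_def)
  moreover have "path_set ps = C (length ps - 1)"
  proof
    show "path_set ps \<subseteq> C (length ps - 1)"
    proof
      fix z assume "z \<in> path_set ps"
      then show "z \<in> C (length ps - 1)"
      proof (cases rule: path_set_cases)
        case (vertex i)
        then show ?thesis by (cases i) (auto simp: C_def intro!: bexI[where x="i - 1"])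
      qed (auto simp: C_def)
    qed
  qed (use assms in \<open>auto simp: C_def path_set_def\<close>)
  ultimately show ?thesis using assms by simp
qed

lemma connected_hits_between:
  fixes f :: "'a::topological_space \<Rightarrow> real"
  assumes "connected C" "continuous_on C f" "p \<in> C" "q \<in> C" "t \<in> closed_segment (f p) (f q)"
  shows "\<exists>z\<in>C. f z = t"
proof -
  have "is_interval (f ` C)"
    using connected_continuous_image[OF assms(2,1)] is_interval_connected_1 by blast
  then have "closed_segment (f p) (f q) \<subseteq> f ` C"
    using assms(3,4) is_interval_convex_1 by (intro closed_segment_subset) auto
  then show ?thesis using assms(5) by auto
qed

lemma path_set_singleton [simp]: "path_set [x] = {x}"
  by (auto simp: path_set_def)

lemma path_set_Cons2 [simp]: "path_set (x # y # ys) = closed_segment x y \<union> path_set (y # ys)"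
proof -
  have idx: "{i. Suc i < length (x # y # ys)} = insert 0 (Suc ` {i. Suc i < length (y # ys)})"
    by (auto simp: image_iff) (metis Suc_less_eq not0_implies_Suc)
  show ?thesis
    unfolding path_set_def idx by auto
qed

lemma path_len_singleton [simp]: "path_len [x] = 0"
  by (simp add: path_len_def)

lemma path_len_Cons2 [simp]: "path_len (x # y # ys) = l1 x y + path_len (y # ys)"
  by (simp add: path_len_conv_sum sum.lessThan_Suc_shift del: sum.lessThan_Suc)

lemma rect_path_singleton [simp]: "rect_path [x]"
  by (simp add: rect_path_def)

lemma rect_path_Cons2 [simp]:
  "rect_path (x # y # ys) \<longleftrightarrow> x \<noteq> y \<and> (fst x = fst y \<or> snd x = snd y) \<and> rect_path (y # ys)"
  by (auto simp: rect_path_def less_Suc_eq_0_disj)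

lemma card_corners_le_1_if_short:
  assumes "length ps \<le> 3"
  shows "card (corners ps) \<le> 1"
proof -
  have "corners ps \<subseteq> {ps!1}"
  proof
    fix x assume "x \<in> corners ps"
    then obtain i where "x = ps!Suc i" "Suc (Suc i) < length ps"
      by (auto simp: corners_def)
    moreover have "i = 0" using calculation(2) assms by arith
    ultimately show "x \<in> {ps!1}" by simp
  qed
  then show ?thesis
    using card_mono[of "{ps!1}" "corners ps"] by simp
qed

text \<open>Degenerate legs are dropped, so that consecutive points stay distinct.\<close>
definition elbow_path :: "pt \<Rightarrow> pt \<Rightarrow> pt \<Rightarrow> pt list" where
  "elbow_path p m q = (if p = m then [m] else [p, m]) @ (if m = q then [] else [q])"

lemma elbow_path:
  assumes "elbow p m q"
  shows "rect_path (elbow_path p m q)" "hd (elbow_path p m q) = p" "last (elbow_path p m q) = q"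
    "path_len (elbow_path p m q) = l1 p q"
    "path_set (elbow_path p m q) = closed_segment p m \<union> closed_segment m q"
    "length (elbow_path p m q) \<le> 3"
  using l1_elbow[OF assms] assms
  by (auto simp: elbow_path_def)

lemma path_len_shortest_rect_path:
  assumes "shortest_rect_path p q ps"
  shows "path_len ps = l1 p q"
proof -
  let ?m = "(fst q, snd p)"
  have "elbow p ?m q" by simp
  then have "path_len ps \<le> l1 p q"
    using assms elbow_path[of p ?m q] unfolding shortest_rect_path_def by metis
  moreover have "l1 p q \<le> path_len ps"
    using assms l1_hd_last_le_path_len[of ps] unfolding shortest_rect_path_def rect_path_def by auto
  ultimately show ?thesis by simp
qed

lemma short1_elbow_path:
  assumes "elbow p m q"
  shows "short1 p q (elbow_path p m q)"
  unfolding short1_def shortest_rect_path_def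
  using elbow_path[OF assms] l1_hd_last_le_path_len card_corners_le_1_if_short
  by (metis rect_path_def)

lemma shortest_rect_path_in_box:
  assumes "shortest_rect_path p q ps" "z \<in> path_set ps"
  shows "fst z \<in> closed_segment (fst p) (fst q) \<and> snd z \<in> closed_segment (snd p) (snd q)"
proof (rule in_box_if_l1_tight)
  show "l1 p z + l1 z q \<le> l1 p q"
    using assms l1_via_point_le_path_len[of ps z] path_len_shortest_rect_path[OF assms(1)]
    unfolding shortest_rect_path_def rect_path_def by auto
qed

lemma shortest_rect_path_distinct:
  assumes "shortest_rect_path p q ps" "i < j" "j < length ps"
  shows "ps!i \<noteq> ps!j"
proof
  assume eq: "ps!i = ps!j"
  let ?f = "\<lambda>k. l1 (ps!k) (ps!Suc k)"
  let ?N = "length ps - 1"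
  have rp: "rect_path ps" and ends: "ps!0 = p" "ps!?N = q"
    using assms(1) by (auto simp: shortest_rect_path_def rect_path_def hd_conv_nth last_conv_nth)
  have "l1 (ps!0) (ps!i) \<le> sum ?f {0..<i}" "l1 (ps!j) (ps!?N) \<le> sum ?f {j..<?N}"
    using l1_nth_le_sum[of 0 i ps] l1_nth_le_sum[of j ?N ps] assms by auto
  moreover have "?f i \<le> sum ?f {i..<j}"
    using assms by (intro member_le_sum) (auto simp: l1_nonneg)
  moreover have "0 < ?f i"
    using rp assms by (intro l1_pos) (auto simp: rect_path_def)
  moreover have "l1 (ps!0) (ps!?N) \<le> l1 (ps!0) (ps!i) + l1 (ps!j) (ps!?N)"
    using eq l1_triangle by metis
  ultimately show False
    using path_len_split[of i j ps] path_len_shortest_rect_path[OF assms(1)] assms ends by simp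
qed

lemma shortest_rect_path_connected:
  assumes "shortest_rect_path p q ps"
  shows "connected (path_set ps)" "p \<in> path_set ps" "q \<in> path_set ps"
  using assms connected_path_set set_subset_path_set hd_in_set last_in_set
  unfolding shortest_rect_path_def rect_path_def by blast+

lemma rect_convex_horizontal_segment:
  assumes "rect_convex W" "u \<in> W" "w \<in> W" "snd u = snd w"
  shows "closed_segment u w \<subseteq> W"
proof
  fix z assume z: "z \<in> closed_segment u w"
  obtain ps where ps: "shortest_rect_path u w ps" "path_set ps \<subseteq> W"
    using assms(1-3) unfolding rect_convex_def by blast
  have zz: "fst z \<in> closed_segment (fst u) (fst w)" "snd z = snd u"
    using z unfolding closed_segment_same_snd[OF assms(4)] by auto
  obtain y where y: "y \<in> path_set ps" "fst y = fst z"
    using connected_hits_between[OF shortest_rect_path_connected(1)[OF ps(1)]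
        continuous_on_fst[OF continuous_on_id] shortest_rect_path_connected(2,3)[OF ps(1)] zz(1)]
    by blast
  have "snd y = snd u"
    using shortest_rect_path_in_box[OF ps(1) y(1)] assms(4) by simp
  then have "y = z" using y zz by (simp add: prod_eq_iff)
  then show "z \<in> W" using y ps(2) by blast
qed

lemma rect_convex_vertical_segment:
  assumes "rect_convex W" "u \<in> W" "w \<in> W" "fst u = fst w"
  shows "closed_segment u w \<subseteq> W"
proof
  fix z assume z: "z \<in> closed_segment u w"
  obtain ps where ps: "shortest_rect_path u w ps" "path_set ps \<subseteq> W"
    using assms(1-3) unfolding rect_convex_def by blast
  have zz: "snd z \<in> closed_segment (snd u) (snd w)" "fst z = fst u"
    using z unfolding closed_segment_same_fst[OF assms(4)] by auto
  obtain y where y: "y \<in> path_set ps" "snd y = snd z"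
    using connected_hits_between[OF shortest_rect_path_connected(1)[OF ps(1)]
        continuous_on_snd[OF continuous_on_id] shortest_rect_path_connected(2,3)[OF ps(1)] zz(1)]
    by blast
  have "fst y = fst u"
    using shortest_rect_path_in_box[OF ps(1) y(1)] assms(4) by simp
  then have "y = z" using y zz by (simp add: prod_eq_iff)
  then show "z \<in> W" using y ps(2) by blast
qed

lemma eq_if_Suc_eq_between:
  assumes "\<And>k. lo \<le> k \<Longrightarrow> k < hi \<Longrightarrow> f k = f (Suc k)" "lo \<le> i" "i \<le> hi"
  shows "f i = f lo"
  using assms(2,3) by (induction i rule: dec_induct) (use assms(1) in auto)

lemma at_most_one_switch:
  fixes H :: "nat \<Rightarrow> bool"
  assumes "card {i. Suc (Suc i) < n \<and> H i \<noteq> H (Suc i)} \<le> 1" "0 < n"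
  obtains k b where "k < n" "\<And>i. i < k \<Longrightarrow> H i = b" "\<And>i. k \<le> i \<Longrightarrow> Suc i < n \<Longrightarrow> H i = (\<not> b)"
proof -
  define C where "C = {i. Suc (Suc i) < n \<and> H i \<noteq> H (Suc i)}"
  have step: "H i = H (Suc i)" if "Suc (Suc i) < n" "i \<notin> C" for i
    using that by (auto simp: C_def)
  have "finite C" by (rule finite_subset[of _ "{..<n}"]) (auto simp: C_def)
  moreover have "card C = 0 \<or> card C = 1" using assms(1) unfolding C_def by linarith
  ultimately consider "C = {}" | j where "C = {j}"
    using card_1_singletonE by auto
  then show ?thesis
  proof cases
    case 1
    have const: "H i = H 0" if "i \<le> n - 2" for i
      using eq_if_Suc_eq_between[of 0 "n - 2" H i] step that 1 by simp
    show ?thesis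
    proof (rule that[of "n - 1" "H 0"])
      show "H i = H 0" if "i < n - 1" for i using const[of i] that by simp
    qed (use assms(2) in auto)
  next
    case (2 j)
    then have j: "Suc (Suc j) < n" "H j \<noteq> H (Suc j)" by (auto simp: C_def)
    have pre: "H i = H 0" if "i \<le> j" for i
      using eq_if_Suc_eq_between[of 0 j H i] step that 2 j by simp
    have suf: "H i = H (Suc j)" if "Suc j \<le> i" "i \<le> n - 2" for i
      using eq_if_Suc_eq_between[of "Suc j" "n - 2" H i] step that 2 by simp
    show ?thesis
    proof (rule that[of "Suc j" "H j"])
      show "Suc j < n" using j by simp
      show "H i = H j" if "i < Suc j" for i using pre[of i] pre[of j] that by simp
      show "H i = (\<not> H j)" if "Suc j \<le> i" "Suc i < n" for i using suf[of i] that j by auto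
    qed
  qed
qed

lemma card_corners_eq_card_turns:
  assumes "rect_path ps" "\<And>i j. i < j \<Longrightarrow> j < length ps \<Longrightarrow> ps!i \<noteq> ps!j"
  defines "H \<equiv> \<lambda>i. snd (ps!i) = snd (ps!Suc i)"
  shows "card (corners ps) = card {i. Suc (Suc i) < length ps \<and> H i \<noteq> H (Suc i)}"
proof -
  let ?C = "{i. Suc (Suc i) < length ps \<and> H i \<noteq> H (Suc i)}"
  have leg: "ps!i \<noteq> ps!Suc i \<and> (fst (ps!i) = fst (ps!Suc i) \<longleftrightarrow> \<not> H i)" if "Suc i < length ps" for i
    using assms(1) that unfolding rect_path_def H_def by (auto simp: prod_eq_iff)
  have "corners ps = (\<lambda>i. ps!Suc i) ` ?C"
    unfolding corners_def horiz_def vert_def using leg by (auto simp: H_def)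
  moreover have "inj_on (\<lambda>i. ps!Suc i) ?C"
  proof (rule inj_onI)
    fix i j assume "i \<in> ?C" "j \<in> ?C" "ps!Suc i = ps!Suc j"
    then show "i = j" using assms(2)[of "Suc i" "Suc j"] assms(2)[of "Suc j" "Suc i"]
      by (auto dest: linorder_neq_iff[THEN iffD1])
  qed
  ultimately show ?thesis by (simp add: card_image)
qed

lemma path_set_subset_Un_convex:
  assumes "k < length ps" "convex A" "convex B"
    "\<And>i. i \<le> k \<Longrightarrow> ps!i \<in> A" "\<And>i. k \<le> i \<Longrightarrow> i < length ps \<Longrightarrow> ps!i \<in> B"
  shows "path_set ps \<subseteq> A \<union> B"
proof
  fix z assume "z \<in> path_set ps"
  then show "z \<in> A \<union> B"
  proof (cases rule: path_set_cases)
    case (vertex i)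
    then show ?thesis using assms(4,5) by (cases "i \<le> k") auto
  next
    case (edge i)
    show ?thesis
    proof (cases "Suc i \<le> k")
      case True
      then have "closed_segment (ps!i) (ps!Suc i) \<subseteq> A"
        using assms(2,4) by (intro closed_segment_subset) auto
      then show ?thesis using edge by auto
    next
      case False
      then have "closed_segment (ps!i) (ps!Suc i) \<subseteq> B"
        using assms(3,5) edge by (intro closed_segment_subset) auto
      then show ?thesis using edge by auto
    qed
  qed
qed

lemma connected_eq_elbow:
  fixes C :: "pt set"
  assumes "connected C" "p \<in> C" "m \<in> C" "q \<in> C" "snd m = snd p" "fst m = fst q"
    and sub: "C \<subseteq> closed_segment p m \<union> closed_segment m q"
  shows "C = closed_segment p m \<union> closed_segment m q"
proof -
  have pm: "closed_segment p m = closed_segment (fst p) (fst q) \<times> {snd p}"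
    using assms(5,6) closed_segment_same_snd[of p m] by simp
  have mq: "closed_segment m q = {fst q} \<times> closed_segment (snd p) (snd q)"
    using assms(5,6) closed_segment_same_fst[of m q] by simp
  have "z \<in> C" if z: "z \<in> closed_segment p m" for z
  proof (cases "fst z = fst q")
    case True
    then have "z = m" using z assms(5,6) unfolding pm by (auto simp: prod_eq_iff)
    then show ?thesis using assms(3) by simp
  next
    case False
    have "fst z \<in> closed_segment (fst p) (fst q)" using z unfolding pm by auto
    then obtain w where "w \<in> C" "fst w = fst z"
      using connected_hits_between[OF assms(1) continuous_on_fst[OF continuous_on_id] assms(2,4)]
      by blast
    moreover have "w \<in> closed_segment p m"
      using calculation sub False unfolding mq by auto
    ultimately show ?thesis using z unfolding pm by (auto simp: prod_eq_iff)
  qed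
  moreover have "z \<in> C" if z: "z \<in> closed_segment m q" for z
  proof (cases "snd z = snd p")
    case True
    then have "z = m" using z assms(5,6) unfolding mq by (auto simp: prod_eq_iff)
    then show ?thesis using assms(3) by simp
  next
    case False
    have "snd z \<in> closed_segment (snd p) (snd q)" using z unfolding mq by auto
    then obtain w where "w \<in> C" "snd w = snd z"
      using connected_hits_between[OF assms(1) continuous_on_snd[OF continuous_on_id] assms(2,4)]
      by blast
    moreover have "w \<in> closed_segment m q"
      using calculation sub False unfolding pm by auto
    ultimately show ?thesis using z unfolding mq by (auto simp: prod_eq_iff)
  qed
  ultimately show ?thesis using sub by blast
qed

lemma elbow_legs_meet_at_corner:
  assumes "elbow p m q"
  shows "closed_segment p m \<inter> closed_segment m q = {m}"
proof -
  have "fst z = fst m \<and> snd z = snd m" if "z \<in> closed_segment p m" "z \<in> closed_segment m q" for z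
    using assms
  proof
    assume "snd p = snd m \<and> fst m = fst q"
    then show ?thesis
      using that closed_segment_same_snd[of p m] closed_segment_same_fst[of m q] by auto
  next
    assume "fst p = fst m \<and> snd m = snd q"
    then show ?thesis
      using that closed_segment_same_fst[of p m] closed_segment_same_snd[of m q] by auto
  qed
  then show ?thesis by (auto simp: prod_eq_iff)
qed

lemma path_set_eq_elbow:
  assumes sh: "shortest_rect_path p q ps" and k: "k < length ps" and "elbow p m q"
    and pre: "\<And>i. i \<le> k \<Longrightarrow> ps!i \<in> closed_segment p m"
    and suf: "\<And>i. k \<le> i \<Longrightarrow> i < length ps \<Longrightarrow> ps!i \<in> closed_segment m q"
  shows "path_set ps = closed_segment p m \<union> closed_segment m q"
proof -
  have sub: "path_set ps \<subseteq> closed_segment p m \<union> closed_segment m q"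
    using k pre suf by (intro path_set_subset_Un_convex) auto
  have "ps!k = m"
    using pre[of k] suf[of k] k elbow_legs_meet_at_corner[OF \<open>elbow p m q\<close>] by blast
  then have m: "m \<in> path_set ps"
    using k set_subset_path_set[of ps] nth_mem[OF k] by auto
  note conn = shortest_rect_path_connected[OF sh]
  from \<open>elbow p m q\<close> show ?thesis
  proof
    assume "snd p = snd m \<and> fst m = fst q"
    then show ?thesis using connected_eq_elbow[OF conn(1,2) m conn(3) _ _ sub] by simp
  next
    assume "fst p = fst m \<and> snd m = snd q"
    moreover have "closed_segment p m \<union> closed_segment m q = closed_segment q m \<union> closed_segment m p"
      by (auto simp: closed_segment_commute)
    ultimately show ?thesis using connected_eq_elbow[OF conn(1,3) m conn(2)] sub by simp
  qed
qed

definition turns_at :: "pt list \<Rightarrow> nat \<Rightarrow> (pt \<Rightarrow> real) \<Rightarrow> (pt \<Rightarrow> real) \<Rightarrow> bool" where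
  "turns_at ps k f g \<longleftrightarrow> (\<forall>i<k. f (ps!i) = f (ps!Suc i)) \<and>
     (\<forall>i. k \<le> i \<longrightarrow> Suc i < length ps \<longrightarrow> g (ps!i) = g (ps!Suc i))"

lemma short1_turns_at:
  assumes "short1 p q ps"
  obtains k where "k < length ps" "turns_at ps k snd fst \<or> turns_at ps k fst snd"
proof -
  have sh: "shortest_rect_path p q ps" and rp: "rect_path ps"
    using assms by (auto simp: short1_def shortest_rect_path_def)
  define H where "H i \<longleftrightarrow> snd (ps!i) = snd (ps!Suc i)" for i
  have vertical: "fst (ps!i) = fst (ps!Suc i)" if "Suc i < length ps" "\<not> H i" for i
    using rp that by (auto simp: rect_path_def H_def)
  have "card {i. Suc (Suc i) < length ps \<and> H i \<noteq> H (Suc i)} \<le> 1"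
    using card_corners_eq_card_turns[OF rp shortest_rect_path_distinct[OF sh]] assms
    by (simp add: short1_def H_def)
  moreover have "0 < length ps" using rp by (simp add: rect_path_def)
  ultimately obtain k b where k: "k < length ps" "\<And>i. i < k \<Longrightarrow> H i = b"
    "\<And>i. k \<le> i \<Longrightarrow> Suc i < length ps \<Longrightarrow> H i = (\<not> b)"
    using at_most_one_switch by blast
  show ?thesis
  proof (cases b)
    case True
    then have "turns_at ps k snd fst"
      using k vertical unfolding turns_at_def H_def by auto
    then show ?thesis using that k(1) by blast
  next
    case False
    have "fst (ps!i) = fst (ps!Suc i)" if "i < k" for i
      using vertical[of i] k(1) k(2)[OF that] False that by simp
    then have "turns_at ps k fst snd"
      using k(3) False unfolding turns_at_def H_def by auto
    then show ?thesis using that k(1) by blast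
  qed
qed

lemma turns_at_legs:
  assumes sh: "shortest_rect_path p q ps" and k: "k < length ps" and "turns_at ps k f g"
  shows "i \<le> k \<Longrightarrow> f (ps!i) = f p" "k \<le> i \<Longrightarrow> i < length ps \<Longrightarrow> g (ps!i) = g q"
proof -
  let ?N = "length ps - 1"
  have ends: "ps!0 = p" "ps!?N = q"
    using sh by (auto simp: shortest_rect_path_def rect_path_def hd_conv_nth last_conv_nth)
  show "f (ps!i) = f p" if "i \<le> k"
  proof -
    have "f (ps!i) = f (ps!0)"
      by (rule eq_if_Suc_eq_between[where f="\<lambda>i. f (ps!i)"]) (use that assms in \<open>auto simp: turns_at_def\<close>)
    then show ?thesis using ends by simp
  qed
  show "g (ps!i) = g q" if "k \<le> i" "i < length ps"
  proof -
    have "g (ps!i) = g (ps!k)" "g (ps!?N) = g (ps!k)"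
      by (rule eq_if_Suc_eq_between[where f="\<lambda>i. g (ps!i)" and hi="?N"],
          use that assms in \<open>auto simp: turns_at_def\<close>)+
    then show ?thesis using ends by simp
  qed
qed

lemma path_set_short1:
  assumes "short1 p q ps"
  obtains m where "m \<in> {(fst q, snd p), (fst p, snd q)}"
    "path_set ps = closed_segment p m \<union> closed_segment m q"
proof -
  have sh: "shortest_rect_path p q ps"
    using assms by (simp add: short1_def)
  have box: "fst (ps!i) \<in> closed_segment (fst p) (fst q) \<and> snd (ps!i) \<in> closed_segment (snd p) (snd q)"
    if "i < length ps" for i
    using shortest_rect_path_in_box[OF sh] set_subset_path_set[of ps] nth_mem[OF that] by blast
  obtain k where k: "k < length ps" "turns_at ps k snd fst \<or> turns_at ps k fst snd"
    using short1_turns_at[OF assms] by blast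
  then show ?thesis
  proof (elim disjE)
    assume "turns_at ps k snd fst"
    note legs = turns_at_legs[OF sh k(1) this]
    let ?m = "(fst q, snd p)"
    have "ps!i \<in> closed_segment p ?m" if "i \<le> k" for i
      using legs(1)[OF that] box[of i] that k(1) by (simp add: closed_segment_same_snd mem_Times_iff)
    moreover have "ps!i \<in> closed_segment ?m q" if "k \<le> i" "i < length ps" for i
      using legs(2)[OF that] box[of i] that by (simp add: closed_segment_same_fst mem_Times_iff)
    ultimately show ?thesis
      using that path_set_eq_elbow[OF sh k(1), of ?m] by auto
  next
    assume "turns_at ps k fst snd"
    note legs = turns_at_legs[OF sh k(1) this]
    let ?m = "(fst p, snd q)"
    have "ps!i \<in> closed_segment p ?m" if "i \<le> k" for i
      using legs(1)[OF that] box[of i] that k(1) by (simp add: closed_segment_same_fst mem_Times_iff)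
    moreover have "ps!i \<in> closed_segment ?m q" if "k \<le> i" "i < length ps" for i
      using legs(2)[OF that] box[of i] that by (simp add: closed_segment_same_snd mem_Times_iff)
    ultimately show ?thesis
      using that path_set_eq_elbow[OF sh k(1), of ?m] by auto
  qed
qed

section \<open>The cross is a skeleton\<close>

lemma outside_segment_cases:
  fixes A M Z H :: real
  assumes "Z \<in> closed_segment A M" "H \<notin> closed_segment A M" "Z \<noteq> A"
  shows "(A - Z) * (A - H) < 0 \<or> ((H - M) * (A - M) < 0 \<and> (Z = M \<or> (M - Z) * (M - H) < 0))"
proof (cases "A \<le> M")
  case True
  then have "A < Z" "Z \<le> M" "H < A \<or> M < H"
    using assms by (auto simp: closed_segment_eq_real_ivl)
  then show ?thesis
    by (auto simp: mult_less_0_iff)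
next
  case False
  then have "Z < A" "M \<le> Z" "H < M \<or> A < H"
    using assms by (auto simp: closed_segment_eq_real_ivl)
  then show ?thesis
    by (auto simp: mult_less_0_iff)
qed

lemma sign_if_in_closed_segment:
  fixes t A B :: real
  assumes "t \<in> closed_segment A B"
  shows "0 \<le> (t - B) * (A - B)"
  using assms by (auto simp: closed_segment_eq_real_ivl zero_le_mult_iff split: if_splits)

lemma in_closed_segment_if_sign:
  fixes t A B :: real
  assumes "(t - A) * (t - B) < 0"
  shows "t \<in> closed_segment A B"
  using assms by (auto simp: closed_segment_eq_real_ivl mult_less_0_iff)

text \<open>Throughout, a negative product \<open>(t - A) * (t - B)\<close> encodes that \<open>t\<close> lies strictly
  between \<open>A\<close> and \<open>B\<close>.\<close>

locale rect_cross =
  fixes W :: "pt set" and a b c d :: pt and x0 x1 y0 y1 :: real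
  assumes W_subset_box: "W \<subseteq> {x0..x1} \<times> {y0..y1}"
    and x0_less_x1: "x0 < x1" and y0_less_y1: "y0 < y1"
    and horizontal_convex: "\<And>u w. u \<in> W \<Longrightarrow> w \<in> W \<Longrightarrow> snd u = snd w \<Longrightarrow> closed_segment u w \<subseteq> W"
    and vertical_convex: "\<And>u w. u \<in> W \<Longrightarrow> w \<in> W \<Longrightarrow> fst u = fst w \<Longrightarrow> closed_segment u w \<subseteq> W"
    and snd_a: "snd a = y0" and snd_b: "snd b = y1" and fst_c: "fst c = x0" and fst_d: "fst d = x1"
    and sH_subset: "closed_segment a b \<subseteq> W" and sV_subset: "closed_segment c d \<subseteq> W"
begin

text \<open>The cross is \<open>s\<^sub>H = [a, b]\<close>, \<open>s\<^sub>V = [c, d]\<close>; \<open>sH_x y\<close> is the abscissa of the point of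
  \<open>s\<^sub>H\<close> at height \<open>y\<close>, and \<open>sV_y x\<close> the ordinate of the point of \<open>s\<^sub>V\<close> at abscissa \<open>x\<close>.\<close>

definition sH_x :: "real \<Rightarrow> real" where
  "sH_x y = fst a + (y - y0) / (y1 - y0) * (fst b - fst a)"

definition sV_y :: "real \<Rightarrow> real" where
  "sV_y x = snd c + (x - x0) / (x1 - x0) * (snd d - snd c)"

lemma continuous_on_sH_x: "continuous_on S sH_x"
  unfolding sH_x_def using y0_less_y1 by (intro continuous_intros) auto

lemma continuous_on_sV_y: "continuous_on S sV_y"
  unfolding sV_y_def using x0_less_x1 by (intro continuous_intros) auto

lemma mem_sH_iff: "z \<in> closed_segment a b \<longleftrightarrow> y0 \<le> snd z \<and> snd z \<le> y1 \<and> fst z = sH_x (snd z)"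
proof
  assume "z \<in> closed_segment a b"
  then obtain u where u: "0 \<le> u" "u \<le> 1" "z = (1 - u) *\<^sub>R a + u *\<^sub>R b"
    by (auto simp: in_segment)
  have "snd z = y0 + u * (y1 - y0)" "fst z = fst a + u * (fst b - fst a)"
    unfolding u(3) using snd_a snd_b by (auto simp: algebra_simps)
  moreover have "0 \<le> u * (y1 - y0)" "u * (y1 - y0) \<le> y1 - y0"
    using u y0_less_y1 by (auto simp: mult_left_le)
  moreover have "u = (snd z - y0) / (y1 - y0)"
    using calculation(1) y0_less_y1 by (simp add: divide_simps)
  ultimately show "y0 \<le> snd z \<and> snd z \<le> y1 \<and> fst z = sH_x (snd z)"
    by (simp add: sH_x_def)
next
  assume z: "y0 \<le> snd z \<and> snd z \<le> y1 \<and> fst z = sH_x (snd z)"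
  define u where "u = (snd z - y0) / (y1 - y0)"
  have "0 \<le> u" "u \<le> 1"
    using z y0_less_y1 by (auto simp: u_def divide_simps)
  moreover have "u * (y1 - y0) = snd z - y0"
    using y0_less_y1 by (simp add: u_def)
  then have "z = (1 - u) *\<^sub>R a + u *\<^sub>R b"
    using z snd_a snd_b by (simp add: prod_eq_iff sH_x_def u_def[symmetric] algebra_simps)
  ultimately show "z \<in> closed_segment a b"
    by (auto simp: in_segment)
qed

lemma mem_sV_iff: "z \<in> closed_segment c d \<longleftrightarrow> x0 \<le> fst z \<and> fst z \<le> x1 \<and> snd z = sV_y (fst z)"
proof
  assume "z \<in> closed_segment c d"
  then obtain u where u: "0 \<le> u" "u \<le> 1" "z = (1 - u) *\<^sub>R c + u *\<^sub>R d"
    by (auto simp: in_segment)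
  have "fst z = x0 + u * (x1 - x0)" "snd z = snd c + u * (snd d - snd c)"
    unfolding u(3) using fst_c fst_d by (auto simp: algebra_simps)
  moreover have "0 \<le> u * (x1 - x0)" "u * (x1 - x0) \<le> x1 - x0"
    using u x0_less_x1 by (auto simp: mult_left_le)
  moreover have "u = (fst z - x0) / (x1 - x0)"
    using calculation(1) x0_less_x1 by (simp add: divide_simps)
  ultimately show "x0 \<le> fst z \<and> fst z \<le> x1 \<and> snd z = sV_y (fst z)"
    by (simp add: sV_y_def)
next
  assume z: "x0 \<le> fst z \<and> fst z \<le> x1 \<and> snd z = sV_y (fst z)"
  define u where "u = (fst z - x0) / (x1 - x0)"
  have "0 \<le> u" "u \<le> 1"
    using z x0_less_x1 by (auto simp: u_def divide_simps)
  moreover have "u * (x1 - x0) = fst z - x0"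
    using x0_less_x1 by (simp add: u_def)
  then have "z = (1 - u) *\<^sub>R c + u *\<^sub>R d"
    using z fst_c fst_d by (simp add: prod_eq_iff sV_y_def u_def[symmetric] algebra_simps)
  ultimately show "z \<in> closed_segment c d"
    by (auto simp: in_segment)
qed

lemma interior_in_open_box:
  assumes "z \<in> interior W"
  shows "x0 < fst z \<and> fst z < x1 \<and> y0 < snd z \<and> snd z < y1"
  using assms interior_mono[OF W_subset_box] by (auto simp: interior_Times mem_Times_iff)

text \<open>Between an interior point and \<open>s\<^sub>H\<close> on the same row everything is interior: a thin
  horizontal band around that row is filled by the segments joining a ball around the point to
  \<open>s\<^sub>H\<close>, which lie in \<open>W\<close> by horizontal convexity.\<close>
lemma interior_between_sH:
  assumes "z \<in> interior W" "snd w = snd z" "(fst w - fst z) * (fst w - sH_x (snd z)) < 0"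
  shows "w \<in> interior W"
proof -
  obtain r where r: "r > 0" "ball z r \<subseteq> W"
    using assms(1) by (auto simp: mem_interior)
  define U where "U = {p. y0 < snd p} \<inter> {p. snd p < y1} \<inter> {p. \<bar>snd p - snd z\<bar> < r} \<inter>
     {p. (fst p - fst z) * (fst p - sH_x (snd p)) < 0}"
  have "open U"
    unfolding U_def sH_x_def using y0_less_y1
    by (intro open_Int open_Collect_less continuous_intros) auto
  moreover have "w \<in> U"
    using assms interior_in_open_box[OF assms(1)] r by (auto simp: U_def)
  moreover have "U \<subseteq> W"
  proof
    fix p assume p: "p \<in> U"
    have "dist z (fst z, snd p) < r"
      using p by (cases z) (simp add: U_def dist_Pair_Pair dist_real_def abs_minus_commute)
    then have "(fst z, snd p) \<in> W" using r by auto
    moreover have "(sH_x (snd p), snd p) \<in> W"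
      using p sH_subset mem_sH_iff[of "(sH_x (snd p), snd p)"] by (auto simp: U_def)
    moreover have "fst p \<in> closed_segment (fst z) (sH_x (snd p))"
      using p by (intro in_closed_segment_if_sign) (simp add: U_def)
    then have "p \<in> closed_segment (fst z, snd p) (sH_x (snd p), snd p)"
      by (simp add: closed_segment_same_snd mem_Times_iff)
    ultimately show "p \<in> W" using horizontal_convex by fastforce
  qed
  ultimately show ?thesis using interior_maximal by blast
qed

lemma interior_between_sV:
  assumes "z \<in> interior W" "fst w = fst z" "(snd w - snd z) * (snd w - sV_y (fst z)) < 0"
  shows "w \<in> interior W"
proof -
  obtain r where r: "r > 0" "ball z r \<subseteq> W"
    using assms(1) by (auto simp: mem_interior)
  define U where "U = {p. x0 < fst p} \<inter> {p. fst p < x1} \<inter> {p. \<bar>fst p - fst z\<bar> < r} \<inter>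
     {p. (snd p - snd z) * (snd p - sV_y (fst p)) < 0}"
  have "open U"
    unfolding U_def sV_y_def using x0_less_x1
    by (intro open_Int open_Collect_less continuous_intros) auto
  moreover have "w \<in> U"
    using assms interior_in_open_box[OF assms(1)] r by (auto simp: U_def)
  moreover have "U \<subseteq> W"
  proof
    fix p assume p: "p \<in> U"
    have "dist z (fst p, snd z) < r"
      using p by (cases z) (simp add: U_def dist_Pair_Pair dist_real_def abs_minus_commute)
    then have "(fst p, snd z) \<in> W" using r by auto
    moreover have "(fst p, sV_y (fst p)) \<in> W"
      using p sV_subset mem_sV_iff[of "(fst p, sV_y (fst p))"] by (auto simp: U_def)
    moreover have "snd p \<in> closed_segment (snd z) (sV_y (fst p))"
      using p by (intro in_closed_segment_if_sign) (simp add: U_def)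
    then have "p \<in> closed_segment (fst p, snd z) (fst p, sV_y (fst p))"
      by (simp add: closed_segment_same_fst mem_Times_iff)
    ultimately show "p \<in> W" using vertical_convex by fastforce
  qed
  ultimately show ?thesis using interior_maximal by blast
qed

text \<open>In the conclusions below, \<open>(sH_x (snd m) - fst m) * (fst e - fst m) < 0\<close> says that
  \<open>s\<^sub>H\<close> crosses the row of \<open>m\<close> beyond \<open>m\<close>, as seen from \<open>e\<close>.\<close>
lemma horizontal_leg_ends_in_interior:
  assumes "snd e = snd m" "z \<in> closed_segment e m" "z \<in> interior W" "e \<notin> interior W"
    "closed_segment e m \<inter> closed_segment a b = {}"
  shows "m \<in> interior W \<and> (sH_x (snd m) - fst m) * (fst e - fst m) < 0"
proof -
  have seg: "closed_segment e m = closed_segment (fst e) (fst m) \<times> {snd e}"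
    by (rule closed_segment_same_snd[OF assms(1)])
  have zs: "snd z = snd m" "fst z \<in> closed_segment (fst e) (fst m)"
    using assms(1,2) unfolding seg by auto
  have "(sH_x (snd m), snd m) \<in> closed_segment a b"
    using interior_in_open_box[OF assms(3)] zs by (simp add: mem_sH_iff)
  then have outside: "sH_x (snd m) \<notin> closed_segment (fst e) (fst m)"
    using assms(1,5) unfolding seg by auto
  have "fst z \<noteq> fst e"
    using assms(1,3,4) zs by (metis prod_eq_iff)
  from outside_segment_cases[OF zs(2) outside this]
  consider "(fst e - fst z) * (fst e - sH_x (snd m)) < 0"
    | "(sH_x (snd m) - fst m) * (fst e - fst m) < 0" "fst z = fst m \<or> (fst m - fst z) * (fst m - sH_x (snd m)) < 0"
    by blast
  then show ?thesis
  proof cases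
    case 1
    then have "e \<in> interior W" using interior_between_sH[OF assms(3), of e] zs assms(1) by simp
    then show ?thesis using assms(4) by simp
  next
    case 2
    then have "m \<in> interior W"
      using interior_between_sH[OF assms(3), of m] assms(3) zs prod_eq_iff[of z m] by auto
    then show ?thesis using 2 by simp
  qed
qed

lemma vertical_leg_ends_in_interior:
  assumes "fst e = fst m" "z \<in> closed_segment e m" "z \<in> interior W" "e \<notin> interior W"
    "closed_segment e m \<inter> closed_segment c d = {}"
  shows "m \<in> interior W \<and> (sV_y (fst m) - snd m) * (snd e - snd m) < 0"
proof -
  have seg: "closed_segment e m = {fst e} \<times> closed_segment (snd e) (snd m)"
    by (rule closed_segment_same_fst[OF assms(1)])
  have zs: "fst z = fst m" "snd z \<in> closed_segment (snd e) (snd m)"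
    using assms(1,2) unfolding seg by auto
  have "(fst m, sV_y (fst m)) \<in> closed_segment c d"
    using interior_in_open_box[OF assms(3)] zs by (simp add: mem_sV_iff)
  then have outside: "sV_y (fst m) \<notin> closed_segment (snd e) (snd m)"
    using assms(1,5) unfolding seg by auto
  have "snd z \<noteq> snd e"
    using assms(1,3,4) zs by (metis prod_eq_iff)
  from outside_segment_cases[OF zs(2) outside this]
  consider "(snd e - snd z) * (snd e - sV_y (fst m)) < 0"
    | "(sV_y (fst m) - snd m) * (snd e - snd m) < 0" "snd z = snd m \<or> (snd m - snd z) * (snd m - sV_y (fst m)) < 0"
    by blast
  then show ?thesis
  proof cases
    case 1
    then have "e \<in> interior W" using interior_between_sV[OF assms(3), of e] zs assms(1) by simp
    then show ?thesis using assms(4) by simp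
  next
    case 2
    then have "m \<in> interior W"
      using interior_between_sV[OF assms(3), of m] assms(3) zs prod_eq_iff[of z m] by auto
    then show ?thesis using 2 by simp
  qed
qed

lemma elbow_corner_in_interior:
  assumes "snd e1 = snd m" "fst m = fst e2"
    "(closed_segment e1 m \<union> closed_segment m e2) \<inter> (closed_segment a b \<union> closed_segment c d) = {}"
    "(closed_segment e1 m \<union> closed_segment m e2) \<inter> interior W \<noteq> {}"
    "e1 \<notin> interior W" "e2 \<notin> interior W"
  shows "m \<in> interior W" "(sH_x (snd m) - fst m) * (fst e1 - fst m) < 0"
    "(sV_y (fst m) - snd m) * (snd e2 - snd m) < 0"
proof -
  have avoid: "closed_segment e1 m \<inter> closed_segment a b = {}" "closed_segment e2 m \<inter> closed_segment c d = {}"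
    using assms(3) by (auto simp: closed_segment_commute)
  obtain z where z: "z \<in> closed_segment e1 m \<union> closed_segment e2 m" "z \<in> interior W"
    using assms(4) by (auto simp: closed_segment_commute)
  have "m \<in> interior W"
    using z horizontal_leg_ends_in_interior[OF assms(1) _ _ assms(5) avoid(1)]
      vertical_leg_ends_in_interior[OF assms(2)[symmetric] _ _ assms(6) avoid(2)] by blast
  then show "m \<in> interior W" "(sH_x (snd m) - fst m) * (fst e1 - fst m) < 0"
    "(sV_y (fst m) - snd m) * (snd e2 - snd m) < 0"
    using horizontal_leg_ends_in_interior[OF assms(1) _ _ assms(5) avoid(1), of m]
      vertical_leg_ends_in_interior[OF assms(2)[symmetric] _ _ assms(6) avoid(2), of m] by auto
qed

lemma sH_beyond_vertical_leg:
  assumes "(sH_x (snd p) - fst q) * (fst p - fst q) < 0" "y0 < snd p" "snd p < y1"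
    and leg: "closed_segment (fst q, snd p) q \<inter> closed_segment a b = {}"
    and y: "y \<in> closed_segment (snd p) (snd q)" "y0 \<le> y" "y \<le> y1"
  shows "(sH_x y - fst q) * (fst p - fst q) < 0"
proof (rule ccontr)
  let ?g = "\<lambda>t. (sH_x t - fst q) * (fst p - fst q)"
  assume "\<not> ?thesis"
  then have "0 \<in> closed_segment (?g (snd p)) (?g y)"
    using assms(1) by (auto simp: closed_segment_eq_real_ivl)
  moreover have "continuous_on (closed_segment (snd p) y) ?g"
    by (intro continuous_intros continuous_on_sH_x)
  ultimately obtain t where t: "t \<in> closed_segment (snd p) y" "?g t = 0"
    using IVT'_closed_segment_real[where f="?g" and a="snd p" and b=y] by blast
  then have "sH_x t = fst q"
    using assms(1) by auto
  moreover have "t \<in> closed_segment (snd p) (snd q)" "y0 \<le> t" "t \<le> y1"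
    using t(1) y assms(2,3) by (auto simp: closed_segment_eq_real_ivl split: if_splits)
  ultimately have "(fst q, t) \<in> closed_segment (fst q, snd p) q \<inter> closed_segment a b"
    by (simp add: mem_sH_iff closed_segment_same_fst)
  then show False using leg by blast
qed

lemma sV_beyond_horizontal_leg:
  assumes "(sV_y (fst q) - snd p) * (snd q - snd p) < 0" "x0 < fst q" "fst q < x1"
    and leg: "closed_segment p (fst q, snd p) \<inter> closed_segment c d = {}"
    and x: "x \<in> closed_segment (fst p) (fst q)" "x0 \<le> x" "x \<le> x1"
  shows "(sV_y x - snd p) * (snd q - snd p) < 0"
proof (rule ccontr)
  let ?g = "\<lambda>t. (sV_y t - snd p) * (snd q - snd p)"
  assume "\<not> ?thesis"
  then have "0 \<in> closed_segment (?g (fst q)) (?g x)"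
    using assms(1) by (auto simp: closed_segment_eq_real_ivl)
  moreover have "continuous_on (closed_segment (fst q) x) ?g"
    by (intro continuous_intros continuous_on_sV_y)
  ultimately obtain t where t: "t \<in> closed_segment (fst q) x" "?g t = 0"
    using IVT'_closed_segment_real[where f="?g" and a="fst q" and b=x] by blast
  then have "sV_y t = snd p"
    using assms(1) by auto
  moreover have "t \<in> closed_segment (fst p) (fst q)" "x0 \<le> t" "t \<le> x1"
    using t(1) x assms(2,3) by (auto simp: closed_segment_eq_real_ivl split: if_splits)
  ultimately have "(t, snd p) \<in> closed_segment p (fst q, snd p) \<inter> closed_segment c d"
    by (simp add: mem_sV_iff closed_segment_same_snd)
  then show False using leg by blast
qed

text \<open>By continuity, a cross which passes beyond the corner of an elbow path on both legs
  without meeting the path stays outside the bounding box of the path.\<close>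
lemma box_avoids_cross:
  assumes "p \<notin> interior W" "q \<notin> interior W"
    and avoid: "(closed_segment p (fst q, snd p) \<union> closed_segment (fst q, snd p) q) \<inter>
      (closed_segment a b \<union> closed_segment c d) = {}"
    and meet: "(closed_segment p (fst q, snd p) \<union> closed_segment (fst q, snd p) q) \<inter> interior W \<noteq> {}"
    and w: "fst w \<in> closed_segment (fst p) (fst q)" "snd w \<in> closed_segment (snd p) (snd q)"
  shows "w \<notin> closed_segment a b \<union> closed_segment c d"
proof -
  note corner = elbow_corner_in_interior[of p "(fst q, snd p)" q, simplified, OF avoid meet assms(1,2)]
  have box: "y0 < snd p" "snd p < y1" "x0 < fst q" "fst q < x1"
    using interior_in_open_box[OF corner(1)] by auto
  have "w \<notin> closed_segment a b"
  proof
    assume "w \<in> closed_segment a b"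
    then have "(fst w - fst q) * (fst p - fst q) < 0"
      using sH_beyond_vertical_leg[OF corner(2) box(1,2) _ w(2)] avoid by (auto simp: mem_sH_iff)
    then show False using sign_if_in_closed_segment[OF w(1)] by simp
  qed
  moreover have "w \<notin> closed_segment c d"
  proof
    assume "w \<in> closed_segment c d"
    then have "(snd w - snd p) * (snd q - snd p) < 0"
      using sV_beyond_horizontal_leg[OF corner(3) box(3,4) _ w(1)] avoid by (auto simp: mem_sV_iff)
    then show False
      using sign_if_in_closed_segment[of "snd w" "snd q" "snd p"] w(2)
      by (simp add: closed_segment_commute)
  qed
  ultimately show ?thesis by simp
qed

lemma other_elbow_misses_interior:
  assumes "p \<notin> interior W" "q \<notin> interior W"
    and avoid: "(closed_segment p (fst q, snd p) \<union> closed_segment (fst q, snd p) q) \<inter>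
      (closed_segment a b \<union> closed_segment c d) = {}"
    and meet: "(closed_segment p (fst q, snd p) \<union> closed_segment (fst q, snd p) q) \<inter> interior W \<noteq> {}"
  shows "(closed_segment p (fst p, snd q) \<union> closed_segment (fst p, snd q) q) \<inter> interior W = {}"
proof (rule ccontr)
  let ?m = "(fst p, snd q)"
  assume meet2: "(closed_segment p ?m \<union> closed_segment ?m q) \<inter> interior W \<noteq> {}"
  have "w \<in> closed_segment p ?m \<union> closed_segment ?m q \<Longrightarrow>
      fst w \<in> closed_segment (fst p) (fst q) \<and> snd w \<in> closed_segment (snd p) (snd q)" for w
    by (auto simp: closed_segment_same_fst closed_segment_same_snd closed_segment_commute)
  then have "(closed_segment q ?m \<union> closed_segment ?m p) \<inter> (closed_segment a b \<union> closed_segment c d) = {}"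
    using box_avoids_cross[OF assms] by (auto simp: closed_segment_commute)
  moreover have "(closed_segment q ?m \<union> closed_segment ?m p) \<inter> interior W \<noteq> {}"
    using meet2 by (auto simp: closed_segment_commute)
  ultimately have corner2: "?m \<in> interior W" "(sH_x (snd q) - fst p) * (fst q - fst p) < 0"
    using elbow_corner_in_interior[of q ?m p] assms(1,2) by auto
  note corner = elbow_corner_in_interior[of p "(fst q, snd p)" q, simplified, OF avoid meet assms(1,2)]
  have "y0 < snd p" "snd p < y1" "y0 < snd q" "snd q < y1"
    using interior_in_open_box[OF corner(1)] interior_in_open_box[OF corner2(1)] by auto
  moreover have "closed_segment (fst q, snd p) q \<inter> closed_segment a b = {}"
    using avoid by blast
  ultimately have "(sH_x (snd q) - fst q) * (fst p - fst q) < 0"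
    using sH_beyond_vertical_leg[OF corner(2)] by simp
  moreover have "(sH_x (snd q) - fst p) * (fst q - fst p) + (sH_x (snd q) - fst q) * (fst p - fst q)
      = (fst q - fst p) * (fst q - fst p)"
    by (simp add: algebra_simps)
  ultimately show False using corner2(2) by (smt (verit) zero_le_square)
qed

lemma short1_meets_cross:
  assumes "p \<notin> interior W" "q \<notin> interior W"
    and meet: "\<forall>ps. short1 p q ps \<longrightarrow> path_set ps \<inter> interior W \<noteq> {}"
    and "short1 p q ps"
  shows "path_set ps \<inter> (closed_segment a b \<union> closed_segment c d) \<noteq> {}"
proof
  assume avoid: "path_set ps \<inter> (closed_segment a b \<union> closed_segment c d) = {}"
  let ?m1 = "(fst q, snd p)" and ?m2 = "(fst p, snd q)"
  have meet1: "(closed_segment p ?m1 \<union> closed_segment ?m1 q) \<inter> interior W \<noteq> {}"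
    and meet2: "(closed_segment p ?m2 \<union> closed_segment ?m2 q) \<inter> interior W \<noteq> {}"
    using meet short1_elbow_path[of p ?m1 q] short1_elbow_path[of p ?m2 q]
      elbow_path(5)[of p ?m1 q] elbow_path(5)[of p ?m2 q] by auto
  have commute: "closed_segment u v \<union> closed_segment v w = closed_segment w v \<union> closed_segment v u"
    for u v w :: pt
    by (auto simp: closed_segment_commute)
  obtain m where m: "m \<in> {?m1, ?m2}" and ps: "path_set ps = closed_segment p m \<union> closed_segment m q"
    using path_set_short1[OF assms(4)] by blast
  from m consider "m = ?m1" | "m = ?m2" by blast
  then show False
  proof cases
    case 1
    then show False
      using other_elbow_misses_interior[OF assms(1,2)] avoid ps meet1 meet2 by simp
  next
    case 2
    have "closed_segment q ?m2 \<union> closed_segment ?m2 p = path_set ps"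
      using ps 2 commute[of p ?m2 q] by simp
    moreover have "closed_segment q ?m1 \<union> closed_segment ?m1 p = closed_segment p ?m1 \<union> closed_segment ?m1 q"
      by (rule commute)
    ultimately show False
      using other_elbow_misses_interior[OF assms(2,1)] avoid ps meet1 meet2 2 by simp
  qed
qed

theorem cross_skeleton: "skeleton W {closed_segment a b, closed_segment c d}"
proof -
  have "a \<noteq> b" "c \<noteq> d"
    using snd_a snd_b fst_c fst_d y0_less_y1 x0_less_x1 by auto
  then have "is_segment (closed_segment a b)" "is_segment (closed_segment c d)"
    unfolding is_segment_def by blast+
  moreover have "\<exists>s\<in>{closed_segment a b, closed_segment c d}. path_set ps \<inter> s \<noteq> {}"
    if "p \<notin> interior W" "q \<notin> interior W"
      "\<forall>ps. short1 p q ps \<longrightarrow> path_set ps \<inter> interior W \<noteq> {}" "short1 p q ps" for p q ps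
    using short1_meets_cross[OF that] by blast
  ultimately show ?thesis
    unfolding skeleton_def using sH_subset sV_subset by auto
qed

end

section \<open>Polygons\<close>

lemma poly_boundary_eq_UN: "poly_boundary vs = (\<Union>i<length vs. closed_segment (vs!i) (vs!nxt vs i))"
  by (auto simp: poly_boundary_def edges_def seg_def)

lemma closed_poly_boundary: "closed (poly_boundary vs)"
  unfolding poly_boundary_eq_UN by (intro closed_UN) auto

lemma region_eq_boundary_Un_inside: "region vs = poly_boundary vs \<union> inside (poly_boundary vs)"
  by (simp add: region_def inside_def)

lemma nxt_less: "i < length vs \<Longrightarrow> nxt vs i < length vs"
  unfolding nxt_def by (cases "length vs") auto

lemma set_subset_poly_boundary: "set vs \<subseteq> poly_boundary vs"
proof
  fix v assume "v \<in> set vs"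
  then obtain i where "i < length vs" "v = vs!i" by (auto simp: in_set_conv_nth)
  then show "v \<in> poly_boundary vs" unfolding poly_boundary_eq_UN by auto
qed

lemma path_set_eq_UN:
  assumes "2 \<le> length ps"
  shows "path_set ps = (\<Union>i\<in>{i. Suc i < length ps}. closed_segment (ps!i) (ps!Suc i))"
proof -
  have "ps!i \<in> (\<Union>i\<in>{i. Suc i < length ps}. closed_segment (ps!i) (ps!Suc i))" if "i < length ps" for i
  proof (cases "Suc i < length ps")
    case False
    then have "Suc (i - 1) < length ps" "Suc (i - 1) = i" using that assms by auto
    then show ?thesis by (metis (no_types, lifting) UN_iff ends_in_segment(2) mem_Collect_eq)
  qed auto
  moreover have "set ps \<subseteq> (\<Union>i\<in>{i. Suc i < length ps}. closed_segment (ps!i) (ps!Suc i))"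
  proof
    fix v assume "v \<in> set ps"
    then obtain i where "i < length ps" "v = ps!i" by (auto simp: in_set_conv_nth)
    with calculation show "v \<in> (\<Union>i\<in>{i. Suc i < length ps}. closed_segment (ps!i) (ps!Suc i))"
      by simp
  qed
  ultimately show ?thesis
    unfolding path_set_def by blast
qed

fun polyline :: "pt list \<Rightarrow> real \<Rightarrow> pt" where
  "polyline [] = linepath 0 0"
| "polyline [a] = linepath a a"
| "polyline [a, b] = linepath a b"
| "polyline (a # b # c # r) = linepath a b +++ polyline (b # c # r)"

definition polyline_simple :: "pt list \<Rightarrow> bool" where
  "polyline_simple ws \<longleftrightarrow> (\<forall>i. Suc i < length ws \<longrightarrow> ws!i \<noteq> ws!Suc i) \<and>
    (\<forall>i j. i < j \<longrightarrow> Suc j < length ws \<longrightarrow>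
       closed_segment (ws!i) (ws!Suc i) \<inter> closed_segment (ws!j) (ws!Suc j) \<subseteq> (if j = Suc i then {ws!j} else {}))"

lemma polyline:
  "2 \<le> length ws \<Longrightarrow>
    pathstart (polyline ws) = hd ws \<and> pathfinish (polyline ws) = last ws \<and> path_image (polyline ws) = path_set ws"
  by (induction ws rule: polyline.induct) (auto simp: path_image_join)

lemma polyline_simple_Cons:
  assumes "polyline_simple (a # b # c # r)"
  shows "polyline_simple (b # c # r)" "a \<noteq> b" "closed_segment a b \<inter> path_set (b # c # r) \<subseteq> {b}"
proof -
  let ?L = "a # b # c # r" and ?T = "b # c # r"
  have A1: "\<And>i. Suc i < length ?L \<Longrightarrow> ?L ! i \<noteq> ?L ! Suc i" and
    A2: "\<And>i j. i < j \<Longrightarrow> Suc j < length ?L \<Longrightarrow>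
       closed_segment (?L ! i) (?L ! Suc i) \<inter> closed_segment (?L ! j) (?L ! Suc j) \<subseteq> (if j = Suc i then {?L ! j} else {})"
    using assms unfolding polyline_simple_def by blast+
  have "?T ! i \<noteq> ?T ! Suc i" if "Suc i < length ?T" for i
    using A1[of "Suc i"] that by simp
  moreover have "closed_segment (?T ! i) (?T ! Suc i) \<inter> closed_segment (?T ! j) (?T ! Suc j)
      \<subseteq> (if j = Suc i then {?T ! j} else {})" if "i < j" "Suc j < length ?T" for i j
    using A2[of "Suc i" "Suc j"] that by (simp only: nth_Cons_Suc nat.inject) simp
  ultimately show "polyline_simple ?T"
    unfolding polyline_simple_def by blast
  show "a \<noteq> b" using A1[of 0] by simp
  show "closed_segment a b \<inter> path_set ?T \<subseteq> {b}"
  proof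
    fix x assume "x \<in> closed_segment a b \<inter> path_set ?T"
    then obtain j where j: "Suc j < length ?T" "x \<in> closed_segment a b" "x \<in> closed_segment (?T ! j) (?T ! Suc j)"
      using path_set_eq_UN[of ?T] by auto
    moreover have "closed_segment a b \<inter> closed_segment (?T ! j) (?T ! Suc j) \<subseteq> (if j = 0 then {?T ! j} else {})"
      using A2[of 0 "Suc j"] j(1) by (simp only: nth_Cons_Suc nth_Cons_0 nat.inject) simp
    ultimately show "x \<in> {b}" by (cases "j = 0") auto
  qed
qed

lemma arc_polyline: "2 \<le> length ws \<Longrightarrow> polyline_simple ws \<Longrightarrow> arc (polyline ws)"
proof (induction ws rule: polyline.induct)
  case (3 a b)
  then show ?case by (simp add: polyline_simple_def)
next
  case (4 a b c r)
  note tail = polyline_simple_Cons[OF "4.prems"(2)]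
  show ?case
    unfolding polyline.simps
    using "4.IH" tail polyline[of "b # c # r"] by (intro arc_join) auto
qed auto

lemma simple_polygon_edges_meet:
  assumes "simple_polygon vs" "i < length vs" "j < length vs" "i \<noteq> j"
  shows "closed_segment (vs!i) (vs!nxt vs i) \<inter> closed_segment (vs!j) (vs!nxt vs j) \<subseteq>
    (if j = nxt vs i then {vs!j} else if i = nxt vs j then {vs!i} else {})"
  using assms unfolding simple_polygon_def by (auto split: if_splits)

lemma nth_rotate1_Suc:
  assumes "Suc k < length vs"
  shows "rotate1 vs ! k = vs ! Suc k" "nxt vs k = Suc k"
  using assms nth_rotate1[of k vs] by (simp_all add: nxt_def)

lemma polyline_simple_rotate1:
  assumes sp: "simple_polygon vs"
  shows "polyline_simple (rotate1 vs)"
  unfolding polyline_simple_def length_rotate1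
proof (intro conjI allI impI)
  define n where "n = length vs"
  have n3: "3 \<le> n" and dv: "distinct vs" using sp by (auto simp: simple_polygon_def n_def)
  have nx: "nxt vs i = Suc i mod n" for i by (simp add: nxt_def n_def)
  have ws: "rotate1 vs ! k = vs ! nxt vs k" if "k < n" for k
    using that nth_rotate1[of k vs] by (simp add: nxt_def n_def)
  {
    fix i assume i: "Suc i < length vs"
    have "nxt vs (Suc i) \<noteq> Suc i" "nxt vs (Suc i) < n"
      using i n3 by (auto simp: nx n_def mod_Suc)
    then show "rotate1 vs ! i \<noteq> rotate1 vs ! Suc i"
      using i ws[of "Suc i"] nth_rotate1_Suc[OF i] dv by (auto simp: n_def nth_eq_iff_index_eq)
  next
    fix i j assume ij: "i < j" "Suc j < length vs"
    have c1: "Suc j = nxt vs (Suc i) \<longleftrightarrow> j = Suc i" and c2: "Suc i \<noteq> nxt vs (Suc j)"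
      and c3: "j = Suc i \<Longrightarrow> nxt vs (Suc i) = Suc j"
      using ij n3 by (auto simp: nx n_def mod_Suc)
    have "closed_segment (vs ! Suc i) (vs ! nxt vs (Suc i)) \<inter> closed_segment (vs ! Suc j) (vs ! nxt vs (Suc j))
        \<subseteq> (if j = Suc i then {vs ! Suc j} else {})"
      using simple_polygon_edges_meet[OF sp, of "Suc i" "Suc j"] ij c1 c2 by (auto split: if_splits)
    then show "closed_segment (rotate1 vs ! i) (rotate1 vs ! Suc i) \<inter> closed_segment (rotate1 vs ! j) (rotate1 vs ! Suc j)
        \<subseteq> (if j = Suc i then {rotate1 vs ! j} else {})"
      using ij ws[of "Suc i"] ws[of "Suc j"] nth_rotate1_Suc[of i vs] nth_rotate1_Suc[of j vs] c3
      by (auto simp: n_def)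
  }
qed

lemma path_set_rotate1:
  assumes "2 \<le> length vs"
  shows "path_set (rotate1 vs) = (\<Union>k\<in>{k. Suc k < length vs}. closed_segment (vs!Suc k) (vs!nxt vs (Suc k)))"
proof -
  have "closed_segment (rotate1 vs ! k) (rotate1 vs ! Suc k) = closed_segment (vs!Suc k) (vs!nxt vs (Suc k))"
    if "k \<in> {k. Suc k < length vs}" for k
    using that nth_rotate1_Suc[of k vs] nth_rotate1[of "Suc k" vs] by (simp add: nxt_def)
  then show ?thesis
    unfolding path_set_eq_UN[of "rotate1 vs", unfolded length_rotate1, OF assms]
    by (rule SUP_cong[OF refl])
qed

lemma poly_boundary_eq_first_edge_Un:
  assumes "2 \<le> length vs"
  shows "poly_boundary vs = closed_segment (vs!0) (vs!1) \<union> path_set (rotate1 vs)"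
proof -
  define E where "E j = closed_segment (vs!j) (vs!nxt vs j)" for j
  obtain n where n: "length vs = Suc n"
    using assms by (cases "length vs") auto
  then have "{k. Suc k < length vs} = {..<n}" by auto
  then have "{..<length vs} = insert 0 (Suc ` {k. Suc k < length vs})"
    using lessThan_Suc_eq_insert_0[of n] n by simp
  then have "poly_boundary vs = E 0 \<union> (\<Union>k\<in>{k. Suc k < length vs}. E (Suc k))"
    unfolding poly_boundary_eq_UN E_def[symmetric] by simp
  moreover have "nxt vs 0 = 1" using assms by (simp add: nxt_def)
  ultimately show ?thesis
    using path_set_rotate1[OF assms] by (simp add: E_def)
qed

text \<open>The boundary is the first edge followed by the polyline through \<open>rotate1 vs\<close>.\<close>
lemma simple_closed_path_poly_boundary:
  assumes sp: "simple_polygon vs"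
  obtains g where "simple_path g" "pathfinish g = pathstart g" "path_image g = poly_boundary vs"
proof -
  define ws where "ws = rotate1 vs"
  obtain v0 v1 vr where vs: "vs = v0 # v1 # vr"
    using sp unfolding simple_polygon_def by (metis Suc_le_length_iff numeral_3_eq_3)
  then have lw: "2 \<le> length vs" "2 \<le> length ws" and ends: "hd ws = vs!1" "last ws = vs!0"
    by (simp_all add: ws_def)
  have n1: "nxt vs 0 = 1" using lw by (simp add: nxt_def)
  have "closed_segment (vs!0) (vs!1) \<inter> path_set ws \<subseteq> {vs!0, vs!1}"
  proof
    fix x assume "x \<in> closed_segment (vs!0) (vs!1) \<inter> path_set ws"
    then obtain k where k: "Suc k < length vs" "x \<in> closed_segment (vs!0) (vs!nxt vs 0)"
      "x \<in> closed_segment (vs!Suc k) (vs!nxt vs (Suc k))"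
      unfolding ws_def path_set_rotate1[OF lw(1)] n1 by auto
    moreover have "0 < length vs" using k(1) by linarith
    ultimately have "x \<in> (if Suc k = nxt vs 0 then {vs!Suc k} else if 0 = nxt vs (Suc k) then {vs!0} else {})"
      using simple_polygon_edges_meet[OF sp _ k(1) nat.distinct(1)] by blast
    then show "x \<in> {vs!0, vs!1}" using n1 by (auto split: if_splits)
  qed
  moreover have "vs!0 \<noteq> vs!1"
    using sp vs by (simp add: simple_polygon_def)
  moreover note polyline[OF lw(2)] arc_polyline[OF lw(2)] polyline_simple_rotate1[OF sp]
  ultimately have "simple_path (linepath (vs!0) (vs!1) +++ polyline ws)"
    using ends by (intro simple_path_join_loop) (auto simp: ws_def)
  then show ?thesis
    using that polyline[OF lw(2)] ends poly_boundary_eq_first_edge_Un[OF lw(1)]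
    by (simp add: path_image_join ws_def)
qed

text \<open>By the Jordan curve theorem the boundary is the frontier of a bounded component of its
  complement; that component is open and lies in the region.\<close>
lemma poly_boundary_subset_closure_interior:
  assumes sp: "simple_polygon vs"
  shows "poly_boundary vs \<subseteq> closure (interior (region vs))"
proof -
  obtain g where g: "simple_path g" "pathfinish g = pathstart g" "path_image g = poly_boundary vs"
    using simple_closed_path_poly_boundary[OF sp] by blast
  let ?S = "poly_boundary vs"
  have "?S homeomorphic sphere (0::complex) 1"
    using homeomorphic_simple_path_image_circle[OF g(1) g(2), of 1 0] g(3) by simp
  also have "sphere (0::complex) 1 homeomorphic sphere (0::pt) 1"
    by (rule homeomorphic_spheres_gen) auto
  finally have hom: "?S homeomorphic sphere (0::pt) 1" .
  have cS: "compact ?S" using compact_path_image[OF simple_path_imp_path[OF g(1)]] g(3) by simp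
  then have "bounded (- (- ?S))" using compact_imp_bounded by simp
  then obtain C where C: "C \<in> components (- ?S)" "bounded C"
    using cobounded_has_bounded_component[of "- ?S"] Jordan_Brouwer_separation[OF hom] by auto
  have "C \<subseteq> inside ?S"
  proof
    fix y assume y: "y \<in> C"
    obtain z where z: "z \<in> - ?S" "C = connected_component_set (- ?S) z"
      using C(1) by (auto simp: components_iff)
    then have "C = connected_component_set (- ?S) y"
      using y connected_component_eq by fastforce
    moreover have "y \<in> - ?S" using y z connected_component_subset by blast
    ultimately show "y \<in> inside ?S" using C(2) by (auto simp: inside_def)
  qed
  moreover have "open C"
    using open_components[OF _ C(1)] compact_imp_closed[OF cS] by auto
  ultimately have "C \<subseteq> interior (region vs)"
    using region_eq_boundary_Un_inside[of vs] by (intro interior_maximal) auto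
  moreover have "?S \<subseteq> closure C"
    using Jordan_Brouwer_frontier[OF hom C(1)] by (auto simp: frontier_def)
  ultimately show ?thesis
    using closure_mono by blast
qed

definition bbox :: "pt list \<Rightarrow> pt set" where
  "bbox vs = {xmin vs..xmax vs} \<times> {ymin vs..ymax vs}"

lemma vertex_in_bbox: "v \<in> set vs \<Longrightarrow> v \<in> bbox vs"
  by (auto simp: bbox_def xmin_def xmax_def ymin_def ymax_def mem_Times_iff)

lemma region_subset_bbox: "region vs \<subseteq> bbox vs"
proof -
  have convex: "convex (bbox vs)"
    unfolding bbox_def by (intro convex_Times convex_real_interval)
  have "closed_segment (vs!i) (vs!nxt vs i) \<subseteq> bbox vs" if "i < length vs" for i
    using that nxt_less[OF that] closed_segment_subset[OF vertex_in_bbox vertex_in_bbox convex]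
    by simp
  then have boundary: "poly_boundary vs \<subseteq> bbox vs"
    unfolding poly_boundary_eq_UN by blast
  then have "inside (poly_boundary vs) \<subseteq> bbox vs"
    using outside_subset_convex[OF convex boundary] inside_Int_outside by blast
  then show ?thesis
    using boundary region_eq_boundary_Un_inside by blast
qed

lemma bounded_region: "bounded (region vs)"
proof (rule bounded_subset[OF _ region_subset_bbox])
  show "bounded (bbox vs)"
    unfolding bbox_def by (intro bounded_Times compact_imp_bounded compact_Icc)
qed

lemma collinear_if_same_snd: "snd x = snd y \<Longrightarrow> snd y = snd z \<Longrightarrow> collinear {x, y, z::pt}"
  unfolding collinear_def
  by (rule exI[of _ "(1, 0)"]) (auto simp: prod_eq_iff intro!: exI[where x="fst _ - fst _"])

lemma collinear_if_same_fst: "fst x = fst y \<Longrightarrow> fst y = fst z \<Longrightarrow> collinear {x, y, z::pt}"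
  unfolding collinear_def
  by (rule exI[of _ "(0, 1)"]) (auto simp: prod_eq_iff intro!: exI[where x="snd _ - snd _"])

lemma bbox_nondegenerate:
  assumes "simple_polygon vs" "general_position vs"
  shows "xmin vs < xmax vs" "ymin vs < ymax vs"
proof -
  obtain v0 v1 v2 vr where vs: "vs = v0 # v1 # v2 # vr"
    using assms(1) unfolding simple_polygon_def by (metis Suc_le_length_iff numeral_3_eq_3)
  then have nc: "\<not> collinear {v0, v1, v2}"
    using assms unfolding simple_polygon_def general_position_def by auto
  have bounds: "xmin vs \<le> fst v" "fst v \<le> xmax vs" "ymin vs \<le> snd v" "snd v \<le> ymax vs"
    if "v \<in> set vs" for v
    using vertex_in_bbox[OF that] by (auto simp: bbox_def)
  show "xmin vs < xmax vs"
  proof (rule ccontr)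
    assume "\<not> ?thesis"
    then have "fst v = xmin vs" if "v \<in> set vs" for v using bounds[OF that] by linarith
    then show False using nc collinear_if_same_fst[of v0 v1 v2] vs by simp
  qed
  show "ymin vs < ymax vs"
  proof (rule ccontr)
    assume "\<not> ?thesis"
    then have "snd v = ymin vs" if "v \<in> set vs" for v using bounds[OF that] by linarith
    then show False using nc collinear_if_same_snd[of v0 v1 v2] vs by simp
  qed
qed

lemma bbox_sides_attained:
  assumes "vs \<noteq> []"
  shows "xmin vs \<in> fst ` set vs" "xmax vs \<in> fst ` set vs"
    "ymin vs \<in> snd ` set vs" "ymax vs \<in> snd ` set vs"
  using assms by (simp_all add: xmin_def xmax_def ymin_def ymax_def)

lemma boundary_if_in_region_on_vertical_side:
  assumes "(X, Y) \<in> region vs" "X = xmin vs \<or> X = xmax vs"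
  shows "(X, Y) \<in> poly_boundary vs"
proof (rule ccontr)
  assume "(X, Y) \<notin> poly_boundary vs"
  then have "(X, Y) \<in> inside (poly_boundary vs)"
    using assms(1) region_eq_boundary_Un_inside by blast
  then obtain r where r: "r > 0" "ball (X, Y) r \<subseteq> inside (poly_boundary vs)"
    using open_inside[OF closed_poly_boundary] open_contains_ball by blast
  then have "(X - r/2, Y) \<in> bbox vs" "(X + r/2, Y) \<in> bbox vs"
    using region_subset_bbox region_eq_boundary_Un_inside
    by (auto simp: subset_iff dist_Pair_Pair dist_real_def)
  then show False using assms(2) r(1) by (auto simp: bbox_def)
qed

lemma extreme_boundary_point_is_vertex:
  assumes "rectilinear vs" "(X, Y) \<in> poly_boundary vs"
    and "(\<forall>v\<in>set vs. X \<le> fst v) \<or> (\<forall>v\<in>set vs. fst v \<le> X)"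
    and "(\<forall>v\<in>set vs. Y \<le> snd v) \<or> (\<forall>v\<in>set vs. snd v \<le> Y)"
  shows "(X, Y) \<in> set vs"
proof -
  obtain i where i: "i < length vs" "(X, Y) \<in> closed_segment (vs!i) (vs!nxt vs i)"
    using assms(2) by (auto simp: poly_boundary_eq_UN)
  let ?u = "vs!i" and ?w = "vs!nxt vs i"
  have "nxt vs i < length vs"
    using nxt_less[OF i(1)] .
  then have mem: "?u \<in> set vs" "?w \<in> set vs"
    using i(1) by simp_all
  have "(?u, ?w) \<in> edges vs"
    using i(1) by (auto simp: edges_def)
  then have "fst ?u = fst ?w \<or> snd ?u = snd ?w"
    using assms(1) unfolding rectilinear_def by fastforce
  then have "(X, Y) = ?u \<or> (X, Y) = ?w"
  proof
    assume "snd ?u = snd ?w"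
    then have "Y = snd ?u" "X \<in> closed_segment (fst ?u) (fst ?w)"
      using i(2) closed_segment_same_snd[of ?u ?w] by auto
    moreover have "X = fst ?u \<or> X = fst ?w"
      using calculation(2) assms(3) mem by (auto simp: closed_segment_eq_real_ivl split: if_splits)
    ultimately show ?thesis using \<open>snd ?u = snd ?w\<close> by (auto simp: prod_eq_iff)
  next
    assume "fst ?u = fst ?w"
    then have "X = fst ?u" "Y \<in> closed_segment (snd ?u) (snd ?w)"
      using i(2) closed_segment_same_fst[of ?u ?w] by auto
    moreover have "Y = snd ?u \<or> Y = snd ?w"
      using calculation(2) assms(4) mem by (auto simp: closed_segment_eq_real_ivl split: if_splits)
    ultimately show ?thesis using \<open>fst ?u = fst ?w\<close> by (auto simp: prod_eq_iff)
  qed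
  then show ?thesis using mem by auto
qed

lemma vertex_incident_edges:
  assumes sp: "simple_polygon vs" and gp: "general_position vs" and rl: "rectilinear vs"
    and k: "k < length vs"
  obtains e1 e2 where "e1 \<in> edges vs" "e2 \<in> edges vs" "endpoint_of (vs!k) e1" "endpoint_of (vs!k) e2"
    "fst (fst e1) = fst (snd e1)" "snd (fst e2) = snd (snd e2)"
proof -
  define n where "n = length vs"
  define k0 where "k0 = (if k = 0 then n - 1 else k - 1)"
  have n3: "3 \<le> n" and dv: "distinct vs" using sp by (auto simp: simple_polygon_def n_def)
  have idx: "k0 < n" "nxt vs k0 = k" "nxt vs k < n" "k0 \<noteq> k" "nxt vs k \<noteq> k" "k0 \<noteq> nxt vs k"
    using k n3 by (auto simp: k0_def nxt_def n_def mod_Suc)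
  let ?u = "vs!k0" and ?v = "vs!k" and ?w = "vs!nxt vs k"
  have mem: "?u \<in> set vs" "?v \<in> set vs" "?w \<in> set vs"
    using idx k by (auto simp: n_def)
  have dist: "?u \<noteq> ?v" "?v \<noteq> ?w" "?u \<noteq> ?w"
    using idx k dv by (auto simp: n_def nth_eq_iff_index_eq)
  have "(vs!j, vs!nxt vs j) \<in> edges vs" if "j < n" for j
    using that by (auto simp: edges_def n_def)
  then have e: "(?u, ?v) \<in> edges vs" "(?v, ?w) \<in> edges vs"
    using idx k by (auto simp: n_def)
  then have r: "fst ?u = fst ?v \<or> snd ?u = snd ?v" "fst ?v = fst ?w \<or> snd ?v = snd ?w"
    using rl unfolding rectilinear_def by fastforce+
  have "\<not> collinear {?u, ?v, ?w}"
    using gp mem dist unfolding general_position_def by blast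
  then have "\<not> (snd ?u = snd ?v \<and> snd ?v = snd ?w)" "\<not> (fst ?u = fst ?v \<and> fst ?v = fst ?w)"
    using collinear_if_same_fst[of ?u ?v ?w] collinear_if_same_snd[of ?u ?v ?w] by blast+
  moreover have "\<not> (fst ?u = fst ?v \<and> snd ?u = snd ?v)" "\<not> (fst ?v = fst ?w \<and> snd ?v = snd ?w)"
    using dist by (auto simp: prod_eq_iff)
  ultimately have "(snd ?u = snd ?v \<and> fst ?v = fst ?w) \<or> (fst ?u = fst ?v \<and> snd ?v = snd ?w)"
    using r by argo
  then show ?thesis
  proof
    assume "snd ?u = snd ?v \<and> fst ?v = fst ?w"
    then show ?thesis using that[of "(?v, ?w)" "(?u, ?v)"] e by (simp add: endpoint_of_def)
  next
    assume "fst ?u = fst ?v \<and> snd ?v = snd ?w"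
    then show ?thesis using that[of "(?u, ?v)" "(?v, ?w)"] e by (simp add: endpoint_of_def)
  qed
qed

lemma bbox_corner_in_region:
  assumes sp: "simple_polygon vs" and gp: "general_position vs" and rl: "rectilinear vs"
    and R: "(X, Y) \<in> region vs" and X: "X = xmin vs \<or> X = xmax vs" and Y: "Y = ymin vs \<or> Y = ymax vs"
  shows "(X, Y) \<in> set vs \<and> (\<exists>e1 e2. e1 \<in> edges vs \<and> e2 \<in> edges vs \<and> seg e1 \<subseteq> {p. fst p = X} \<and>
     seg e2 \<subseteq> {p. snd p = Y} \<and> endpoint_of (X, Y) e1 \<and> endpoint_of (X, Y) e2)"
proof -
  have "(X, Y) \<in> set vs"
  proof (rule extreme_boundary_point_is_vertex[OF rl])
    show "(X, Y) \<in> poly_boundary vs" by (rule boundary_if_in_region_on_vertical_side[OF R X])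
    show "(\<forall>v\<in>set vs. X \<le> fst v) \<or> (\<forall>v\<in>set vs. fst v \<le> X)"
      "(\<forall>v\<in>set vs. Y \<le> snd v) \<or> (\<forall>v\<in>set vs. snd v \<le> Y)"
      using X Y vertex_in_bbox[of _ vs] by (auto simp: bbox_def)
  qed
  then obtain k where k: "k < length vs" "vs!k = (X, Y)"
    by (auto simp: in_set_conv_nth)
  obtain e1 e2 where e: "e1 \<in> edges vs" "e2 \<in> edges vs" "endpoint_of (X, Y) e1" "endpoint_of (X, Y) e2"
    and vertical: "fst (fst e1) = fst (snd e1)" and horizontal: "snd (fst e2) = snd (snd e2)"
    using vertex_incident_edges[OF sp gp rl k(1), unfolded k(2)] by blast
  have "X = fst (fst e1)" "Y = snd (fst e2)"
    using e(3,4) vertical horizontal by (auto simp: endpoint_of_def prod_eq_iff)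
  then have "seg e1 \<subseteq> {p. fst p = X}" "seg e2 \<subseteq> {p. snd p = Y}"
    using closed_segment_same_fst[OF vertical] closed_segment_same_snd[OF horizontal]
    by (auto simp: seg_def)
  then show ?thesis
    using \<open>(X, Y) \<in> set vs\<close> e by blast
qed

lemma corner_of_if_in_region:
  assumes "simple_polygon vs" "general_position vs" "rectilinear vs"
  shows "(xmin vs, ymin vs) \<in> region vs \<Longrightarrow> corner_of vs left_edge bottom_edge (xmin vs, ymin vs)"
    "(xmax vs, ymin vs) \<in> region vs \<Longrightarrow> corner_of vs right_edge bottom_edge (xmax vs, ymin vs)"
    "(xmin vs, ymax vs) \<in> region vs \<Longrightarrow> corner_of vs left_edge top_edge (xmin vs, ymax vs)"
    "(xmax vs, ymax vs) \<in> region vs \<Longrightarrow> corner_of vs right_edge top_edge (xmax vs, ymax vs)"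
  using bbox_corner_in_region[OF assms]
  unfolding corner_of_def left_edge_def right_edge_def bottom_edge_def top_edge_def by blast+

lemma has_diagonal_if_spanning_segment:
  assumes sp: "simple_polygon vs" and gp: "general_position vs" and rl: "rectilinear vs"
    and seg: "closed_segment u w \<subseteq> region vs"
    and X: "(fst u = xmin vs \<and> fst w = xmax vs) \<or> (fst u = xmax vs \<and> fst w = xmin vs)"
    and Y: "(snd u = ymin vs \<and> snd w = ymax vs) \<or> (snd u = ymax vs \<and> snd w = ymin vs)"
  shows "has_diagonal vs"
proof -
  have ends: "u \<in> region vs" "w \<in> region vs" "closed_segment w u \<subseteq> region vs"
    using seg by (auto simp: closed_segment_commute)
  note corner = corner_of_if_in_region[OF sp gp rl]
  from X Y consider
      "u = (xmin vs, ymin vs)" "w = (xmax vs, ymax vs)" | "u = (xmin vs, ymax vs)" "w = (xmax vs, ymin vs)"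
    | "u = (xmax vs, ymin vs)" "w = (xmin vs, ymax vs)" | "u = (xmax vs, ymax vs)" "w = (xmin vs, ymin vs)"
    by (cases u; cases w) auto
  then show ?thesis
  proof cases
    case 1
    then have "corner_of vs left_edge bottom_edge u" "corner_of vs right_edge top_edge w"
      using corner(1,4) ends by simp_all
    then show ?thesis unfolding has_diagonal_def using seg by blast
  next
    case 2
    then have "corner_of vs right_edge bottom_edge w" "corner_of vs left_edge top_edge u"
      using corner(2,3) ends by simp_all
    then show ?thesis unfolding has_diagonal_def using ends(3) by blast
  next
    case 3
    then have "corner_of vs right_edge bottom_edge u" "corner_of vs left_edge top_edge w"
      using corner(2,3) ends by simp_all
    then show ?thesis unfolding has_diagonal_def using seg by blast
  next
    case 4
    then have "corner_of vs left_edge bottom_edge w" "corner_of vs right_edge top_edge u"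
      using corner(1,4) ends by simp_all
    then show ?thesis unfolding has_diagonal_def using ends(3) by blast
  qed
qed

lemma segment_endpoints_if_covers:
  fixes lo hi s t :: real
  assumes "lo \<in> closed_segment s t" "hi \<in> closed_segment s t" "s \<in> {lo..hi}" "t \<in> {lo..hi}"
  shows "(s = lo \<and> t = hi) \<or> (s = hi \<and> t = lo)"
  using assms by (auto simp: closed_segment_eq_real_ivl split: if_splits)

section \<open>Skeletons with a single segment\<close>

lemma skeleton_meets_row:
  assumes "skeleton W S" "bounded W" "z \<in> interior W"
  shows "\<exists>s\<in>S. \<exists>w\<in>s. snd w = snd z"
proof -
  obtain B where B: "\<And>w. w \<in> W \<Longrightarrow> norm w \<le> B"
    using assms(2) by (auto simp: bounded_iff)
  define p where "p = (- (B + 1), snd z)"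
  define q where "q = (B + 1, snd z)"
  have bound: "\<bar>fst w\<bar> \<le> B" if "w \<in> W" for w
    using B[OF that] norm_fst_le[where x="fst w" and y="snd w"] by simp
  then have outside: "p \<notin> interior W" "q \<notin> interior W"
    using interior_subset[of W] by (force simp: p_def q_def)+
  have "fst z \<in> {- (B + 1)..B + 1}"
    using bound[of z] interior_subset[of W] assms(3) by auto
  then have z: "z \<in> closed_segment p q"
    by (simp add: p_def q_def closed_segment_same_snd mem_Times_iff closed_segment_eq_real_ivl)
  have path: "path_set ps = closed_segment p q" if sp: "short1 p q ps" for ps
  proof -
    obtain m where "m \<in> {(fst q, snd p), (fst p, snd q)}"
      "path_set ps = closed_segment p m \<union> closed_segment m q"
      using path_set_short1[OF sp] by blast
    moreover have "(fst q, snd p) = q" "(fst p, snd q) = p"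
      by (simp_all add: p_def q_def)
    ultimately show ?thesis by auto
  qed
  then have "\<forall>ps. short1 p q ps \<longrightarrow> path_set ps \<inter> interior W \<noteq> {}"
    using z assms(3) by blast
  then have "\<forall>ps. short1 p q ps \<longrightarrow> (\<exists>s\<in>S. path_set ps \<inter> s \<noteq> {})"
    using assms(1) outside unfolding skeleton_def by blast
  moreover have short: "short1 p q (elbow_path p q q)"
    by (rule short1_elbow_path) (simp add: p_def q_def)
  ultimately obtain s where "s \<in> S" "closed_segment p q \<inter> s \<noteq> {}"
    unfolding path[OF short, symmetric] by blast
  moreover have "snd w = snd z" if "w \<in> closed_segment p q" for w
    using that by (simp add: p_def q_def closed_segment_same_snd mem_Times_iff)
  ultimately show ?thesis by blast
qed

lemma skeleton_meets_column:
  assumes "skeleton W S" "bounded W" "z \<in> interior W"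
  shows "\<exists>s\<in>S. \<exists>w\<in>s. fst w = fst z"
proof -
  obtain B where B: "\<And>w. w \<in> W \<Longrightarrow> norm w \<le> B"
    using assms(2) by (auto simp: bounded_iff)
  define p where "p = (fst z, - (B + 1))"
  define q where "q = (fst z, B + 1)"
  have bound: "\<bar>snd w\<bar> \<le> B" if "w \<in> W" for w
    using B[OF that] norm_snd_le[where x="fst w" and y="snd w"] by simp
  then have outside: "p \<notin> interior W" "q \<notin> interior W"
    using interior_subset[of W] by (force simp: p_def q_def)+
  have "snd z \<in> {- (B + 1)..B + 1}"
    using bound[of z] interior_subset[of W] assms(3) by auto
  then have z: "z \<in> closed_segment p q"
    by (simp add: p_def q_def closed_segment_same_fst mem_Times_iff closed_segment_eq_real_ivl)
  have path: "path_set ps = closed_segment p q" if sp: "short1 p q ps" for ps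
  proof -
    obtain m where "m \<in> {(fst q, snd p), (fst p, snd q)}"
      "path_set ps = closed_segment p m \<union> closed_segment m q"
      using path_set_short1[OF sp] by blast
    moreover have "(fst q, snd p) = p" "(fst p, snd q) = q"
      by (simp_all add: p_def q_def)
    ultimately show ?thesis by auto
  qed
  then have "\<forall>ps. short1 p q ps \<longrightarrow> path_set ps \<inter> interior W \<noteq> {}"
    using z assms(3) by blast
  then have "\<forall>ps. short1 p q ps \<longrightarrow> (\<exists>s\<in>S. path_set ps \<inter> s \<noteq> {})"
    using assms(1) outside unfolding skeleton_def by blast
  moreover have short: "short1 p q (elbow_path p q q)"
    by (rule short1_elbow_path) (simp add: p_def q_def)
  ultimately obtain s where "s \<in> S" "closed_segment p q \<inter> s \<noteq> {}"
    unfolding path[OF short, symmetric] by blast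
  moreover have "fst w = fst z" if "w \<in> closed_segment p q" for w
    using that by (simp add: p_def q_def closed_segment_same_fst mem_Times_iff)
  ultimately show ?thesis by blast
qed

text \<open>The vertices lie in the closure of the interior, so a segment whose shadows on both axes
  cover those of the interior must join opposite corners of the bounding box.\<close>
lemma segment_spans_bbox:
  assumes sp: "simple_polygon vs" and seg: "closed_segment u w \<subseteq> region vs"
    and rows: "\<And>y. y \<in> interior (region vs) \<Longrightarrow> snd y \<in> closed_segment (snd u) (snd w)"
    and cols: "\<And>y. y \<in> interior (region vs) \<Longrightarrow> fst y \<in> closed_segment (fst u) (fst w)"
  shows "(fst u = xmin vs \<and> fst w = xmax vs) \<or> (fst u = xmax vs \<and> fst w = xmin vs)"
    "(snd u = ymin vs \<and> snd w = ymax vs) \<or> (snd u = ymax vs \<and> snd w = ymin vs)"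
proof -
  let ?I = "interior (region vs)"
  have ne: "vs \<noteq> []" using sp by (auto simp: simple_polygon_def)
  have "snd ` closure ?I \<subseteq> closed_segment (snd u) (snd w)"
    by (intro image_closure_subset continuous_intros) (use rows in auto)
  moreover have "fst ` closure ?I \<subseteq> closed_segment (fst u) (fst w)"
    by (intro image_closure_subset continuous_intros) (use cols in auto)
  moreover have "set vs \<subseteq> closure ?I"
    using poly_boundary_subset_closure_interior[OF sp] set_subset_poly_boundary[of vs] by blast
  ultimately have "snd ` set vs \<subseteq> closed_segment (snd u) (snd w)"
    "fst ` set vs \<subseteq> closed_segment (fst u) (fst w)"
    by (metis image_mono order_trans)+
  moreover have "u \<in> bbox vs" "w \<in> bbox vs"
    using seg region_subset_bbox by auto
  ultimately show "(fst u = xmin vs \<and> fst w = xmax vs) \<or> (fst u = xmax vs \<and> fst w = xmin vs)"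
    "(snd u = ymin vs \<and> snd w = ymax vs) \<or> (snd u = ymax vs \<and> snd w = ymin vs)"
    using segment_endpoints_if_covers[of "xmin vs" "fst u" "fst w" "xmax vs"]
      segment_endpoints_if_covers[of "ymin vs" "snd u" "snd w" "ymax vs"] bbox_sides_attained[OF ne]
    by (auto simp: bbox_def mem_Times_iff)
qed

theorem skeleton_card_ge_2:
  assumes sp: "simple_polygon vs" and gp: "general_position vs" and rl: "rectilinear vs"
    and "\<not> has_diagonal vs" and S: "skeleton (region vs) S" "finite S"
  shows "2 \<le> card S"
proof (rule ccontr)
  let ?W = "region vs"
  assume "\<not> 2 \<le> card S"
  then have "\<forall>x\<in>S. \<forall>y\<in>S. x = y"
    using S(2) card_le_Suc0_iff_eq[of S] by simp
  have ne: "vs \<noteq> []" using sp by (auto simp: simple_polygon_def)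
  have "hd vs \<in> closure (interior ?W)"
    using poly_boundary_subset_closure_interior[OF sp] set_subset_poly_boundary[of vs] hd_in_set[OF ne]
    by blast
  then obtain z where "z \<in> interior ?W"
    by (metis closure_empty empty_iff equals0I)
  then obtain s where "s \<in> S"
    using skeleton_meets_row[OF S(1) bounded_region] by blast
  then have "S = {s}"
    using \<open>\<forall>x\<in>S. \<forall>y\<in>S. x = y\<close> by blast
  moreover have "is_segment s" "s \<subseteq> ?W"
    using S(1) \<open>s \<in> S\<close> unfolding skeleton_def by auto
  ultimately obtain u w where s: "S = {closed_segment u w}" "closed_segment u w \<subseteq> ?W"
    unfolding is_segment_def by auto
  have coords: "fst y \<in> closed_segment (fst u) (fst w) \<and> snd y \<in> closed_segment (snd u) (snd w)"
    if "y \<in> closed_segment u w" for y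
    using that closed_segment_PairD[of "fst y" "snd y" "fst u" "snd u" "fst w" "snd w"] by simp
  have rows: "snd y \<in> closed_segment (snd u) (snd w)" if y: "y \<in> interior ?W" for y
  proof -
    obtain s' p where "s' \<in> S" "p \<in> s'" "snd p = snd y"
      using skeleton_meets_row[OF S(1) bounded_region y] by blast
    then show ?thesis using coords[of p] s(1) by auto
  qed
  have cols: "fst y \<in> closed_segment (fst u) (fst w)" if y: "y \<in> interior ?W" for y
  proof -
    obtain s' p where "s' \<in> S" "p \<in> s'" "fst p = fst y"
      using skeleton_meets_column[OF S(1) bounded_region y] by blast
    then show ?thesis using coords[of p] s(1) by auto
  qed
  show False
    using has_diagonal_if_spanning_segment[OF sp gp rl s(2) segment_spans_bbox[OF sp s(2) rows cols]]
      \<open>\<not> has_diagonal vs\<close> by blast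
qed

lemma rect_cross_region:
  assumes "simple_polygon vs" "general_position vs" "rect_convex (region vs)" "is_cross vs a b c d"
  shows "rect_cross (region vs) a b c d (xmin vs) (xmax vs) (ymin vs) (ymax vs)"
proof
  show "region vs \<subseteq> {xmin vs..xmax vs} \<times> {ymin vs..ymax vs}"
    using region_subset_bbox by (simp add: bbox_def)
  show "xmin vs < xmax vs" "ymin vs < ymax vs"
    by (rule bbox_nondegenerate[OF assms(1,2)])+
  show "closed_segment u w \<subseteq> region vs" if "u \<in> region vs" "w \<in> region vs" "snd u = snd w" for u w
    using rect_convex_horizontal_segment[OF assms(3) that] .
  show "closed_segment u w \<subseteq> region vs" if "u \<in> region vs" "w \<in> region vs" "fst u = fst w" for u w
    using rect_convex_vertical_segment[OF assms(3) that] .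
  show "snd a = ymin vs" "snd b = ymax vs" "fst c = xmin vs" "fst d = xmax vs"
    "closed_segment a b \<subseteq> region vs" "closed_segment c d \<subseteq> region vs"
    using assms(4) unfolding is_cross_def left_edge_def right_edge_def bottom_edge_def top_edge_def
    by auto
qed

theorem lemma6:
  fixes vs :: "(real \<times> real) list" and a b c d :: "real \<times> real"
  assumes "simple_polygon vs"
    and "general_position vs"
    and "rectilinear vs"
    and "rect_convex (region vs)"
    and "\<not> has_diagonal vs"
    and "is_cross vs a b c d"
  shows "min_skeleton (region vs) {closed_segment a b, closed_segment c d}"
proof -
  interpret rect_cross "region vs" a b c d "xmin vs" "xmax vs" "ymin vs" "ymax vs"
    using rect_cross_region[OF assms(1,2,4,6)] .
  have "card {closed_segment a b, closed_segment c d} \<le> 2"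
    by (simp add: card_insert_if)
  then show ?thesis
    unfolding min_skeleton_def
    using cross_skeleton skeleton_card_ge_2[OF assms(1-3,5)] by fastforce
qed

end
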